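(* Let $t\geqslant 2$, $r\in\{2t,2t+1\}$ and $n\geqslant 2r-1$. Let $I^\ell$ be as follows. If $\ell=2s-1$ with $2\leqslant s\leqslant r$, then $I^\ell\in\mathrm{Sym}_n$ has as non-trivial cycles one $\ell$-cycle and $r-s$ transpositions. If $\ell=2s$ with $2\leqslant s\leqslant r-2$, then $I^\ell$ has as non-trivial cycles one $\ell$-cycle, one $3$-cycle and $r-s-2$ transpositions. Then $|B_r(I^\ell)\cap B_r(I_n)|=|N_1(I^\ell)|+|N_2(I^\ell)|+|N_3(I^\ell)|$, and this quantity equals: for $\ell=2s-1$: $$\begin{cases}2\binom{r-s}{t}+\ell\sum_{i=1}^{s-1}\binom{r-s}{t-i}, & r=2t,\\[2pt] 2\binom{r-s}{t}+\ell\sum_{i=1}^{s-2}\binom{r-s}{t-i}, & r=2t+1;\end{cases}$$ for $\ell=2s$: $$\begin{cases}2\binom{r-s}{t}+2(\ell+1)\binom{r-s-2}{t-1}+\ell\sum_{i=1}^{s-2}\binom{r-s-1}{t-i-1}, & r=2t,\\[2pt] 2\binom{r-s-1}{t}+\ell\sum_{i=1}^{s-1}\binom{r-s-1}{t-i}, & r=2t+1.\end{cases}$$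
   Context: $\mathrm{Sym}_n$ is the symmetric group on $[n]$, $I_n$ is the identity, the Hamming distance is $d(\pi,\tau)=|\{i:\pi(i)\neq\tau(i)\}|$, $w_H(\pi)=d(I_n,\pi)$, and $B_r(\pi)=\{\sigma:d(\sigma,\pi)\leqslant r\}$. $Tc(\pi)=\{(i,\pi(i)):\pi(i)\neq i\}$. For $\pi$ with $w_H(\pi)=2r-1$: $N_1(\pi)=\{\sigma:Tc(\sigma)\subseteq Tc(\pi),|Tc(\sigma)|=r-1\}$, $N_2(\pi)=\{\sigma:Tc(\sigma)\subseteq Tc(\pi),|Tc(\sigma)|=r\}$, and $N_3(\pi)=\{\sigma:|Tc(\sigma)\cap Tc(\pi)|=r-1,|Tc(\sigma)|=r\}$. Binomial convention: $\binom{0}{0}=1$ and $\binom{p}{q}=0$ if $p<q$, $p<0$ or $q<0$. Empty sums are $0$. *)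

theory Defs
  imports "HOL-Combinatorics.Combinatorics" "HOL-Library.Multiset"
begin

definition Sym :: "nat \<Rightarrow> (nat \<Rightarrow> nat) set" where
  "Sym n = {p. p permutes {1..n}}"

definition hdist :: "nat \<Rightarrow> (nat \<Rightarrow> nat) \<Rightarrow> (nat \<Rightarrow> nat) \<Rightarrow> nat" where
  "hdist n p q = card {i \<in> {1..n}. p i \<noteq> q i}"

definition wH :: "nat \<Rightarrow> (nat \<Rightarrow> nat) \<Rightarrow> nat" where
  "wH n p = hdist n id p"

definition ball_r :: "nat \<Rightarrow> nat \<Rightarrow> (nat \<Rightarrow> nat) \<Rightarrow> (nat \<Rightarrow> nat) set" where
  "ball_r n r p = {\<sigma> \<in> Sym n. hdist n \<sigma> p \<le> r}"

definition Tc :: "nat \<Rightarrow> (nat \<Rightarrow> nat) \<Rightarrow> (nat \<times> nat) set" where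
  "Tc n p = {(i, p i) | i. i \<in> {1..n} \<and> p i \<noteq> i}"

definition N1 :: "nat \<Rightarrow> nat \<Rightarrow> (nat \<Rightarrow> nat) \<Rightarrow> (nat \<Rightarrow> nat) set" where
  "N1 n r p = {\<sigma> \<in> Sym n. Tc n \<sigma> \<subseteq> Tc n p \<and> card (Tc n \<sigma>) = r - 1}"

definition N2 :: "nat \<Rightarrow> nat \<Rightarrow> (nat \<Rightarrow> nat) \<Rightarrow> (nat \<Rightarrow> nat) set" where
  "N2 n r p = {\<sigma> \<in> Sym n. Tc n \<sigma> \<subseteq> Tc n p \<and> card (Tc n \<sigma>) = r}"

definition N3 :: "nat \<Rightarrow> nat \<Rightarrow> (nat \<Rightarrow> nat) \<Rightarrow> (nat \<Rightarrow> nat) set" where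
  "N3 n r p = {\<sigma> \<in> Sym n. card (Tc n \<sigma> \<inter> Tc n p) = r - 1 \<and> card (Tc n \<sigma>) = r}"

definition nontriv_cycles :: "nat \<Rightarrow> (nat \<Rightarrow> nat) \<Rightarrow> nat set set" where
  "nontriv_cycles n p = {orbit p x | x. x \<in> {1..n} \<and> p x \<noteq> x}"

definition cycle_type :: "nat \<Rightarrow> (nat \<Rightarrow> nat) \<Rightarrow> nat multiset" where
  "cycle_type n p = image_mset card (mset_set (nontriv_cycles n p))"

definition bnm :: "int \<Rightarrow> int \<Rightarrow> nat" where
  "bnm p q = (if p < 0 \<or> q < 0 \<or> p < q then 0 else nat p choose nat q)"

end

theory Submission
  imports Defs
begin

text \<open>Let \<sigma> be a permutation, A the set of points it moves and E \<subseteq> A the set where it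
  agrees with \<pi>. As \<pi> moves exactly 2r - 1 points, d(\<sigma>, \<pi>) + |E| = 2r - 1 + |A - moved \<pi>|,
  so \<sigma> lies in both balls iff E = A with |A| \<in> {r - 1, r} (N1, N2) or |E| = r - 1, |A| = r (N3).
  A permutation of the first kind is \<pi> restricted to a set of its cycles of total length |A|. One
  of the second kind arises uniquely by closing the first k \<ge> 2 points of a cycle C of \<pi>, read from
  one of its |C| points, into a k-cycle, together with \<pi> on other cycles of total length r - k.
  Counting sets of cycles of prescribed total length for the two cycle types gives sums of
  binomial coefficients, which Pascal's rule and symmetry bring into the stated form.\<close>

section \<open>Moved points\<close>

definition moved :: "(nat \<Rightarrow> nat) \<Rightarrow> nat set" where
  "moved \<sigma> = {i. \<sigma> i \<noteq> i}"

lemma moved_subset: "\<sigma> permutes {1..n} \<Longrightarrow> moved \<sigma> \<subseteq> {1..n}"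
  unfolding moved_def permutes_def by auto

lemma finite_moved: "\<sigma> permutes {1..n} \<Longrightarrow> finite (moved \<sigma>)"
  using moved_subset finite_subset by blast

lemma hdist_id: "\<sigma> permutes {1..n} \<Longrightarrow> hdist n \<sigma> id = card (moved \<sigma>)"
  unfolding hdist_def using moved_subset[of \<sigma> n]
  by (intro arg_cong[where f = card]) (auto simp: moved_def)

lemma Tc_conv_moved: "\<sigma> permutes {1..n} \<Longrightarrow> Tc n \<sigma> = (\<lambda>i. (i, \<sigma> i)) ` moved \<sigma>"
  using moved_subset[of \<sigma> n] unfolding Tc_def moved_def by auto

lemma card_Tc: "\<sigma> permutes {1..n} \<Longrightarrow> card (Tc n \<sigma>) = card (moved \<sigma>)"
  by (simp add: Tc_conv_moved card_image inj_on_convol_ident)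

lemma Tc_Int_conv:
  assumes "\<sigma> permutes {1..n}"
  shows "Tc n \<sigma> \<inter> Tc n q = (\<lambda>i. (i, \<sigma> i)) ` {i \<in> moved \<sigma>. q i = \<sigma> i}"
proof -
  have "Tc n \<sigma> \<inter> Tc n q = {(i, \<sigma> i) | i. i \<in> {1..n} \<and> \<sigma> i \<noteq> i \<and> q i = \<sigma> i}"
    unfolding Tc_def by auto
  also have "\<dots> = (\<lambda>i. (i, \<sigma> i)) ` {i \<in> moved \<sigma>. q i = \<sigma> i}"
    using moved_subset[OF assms] unfolding moved_def by blast
  finally show ?thesis .
qed

lemma card_Tc_Int:
  "\<sigma> permutes {1..n} \<Longrightarrow> card (Tc n \<sigma> \<inter> Tc n q) = card {i \<in> moved \<sigma>. q i = \<sigma> i}"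
  by (simp add: Tc_Int_conv card_image inj_on_convol_ident)

lemma Tc_subset_iff:
  assumes "\<sigma> permutes {1..n}"
  shows "Tc n \<sigma> \<subseteq> Tc n q \<longleftrightarrow> (\<forall>i\<in>moved \<sigma>. q i = \<sigma> i)"
proof -
  have "Tc n \<sigma> \<subseteq> Tc n q \<longleftrightarrow> Tc n \<sigma> \<inter> Tc n q = Tc n \<sigma>" by blast
  also have "\<dots> \<longleftrightarrow> {i \<in> moved \<sigma>. q i = \<sigma> i} = moved \<sigma>"
    by (subst Tc_Int_conv[OF assms], subst Tc_conv_moved[OF assms])
      (rule inj_on_image_eq_iff[OF inj_on_convol_ident], auto)
  finally show ?thesis by blast
qed

lemma orbit_subset_if_image_subset:
  assumes "f ` U \<subseteq> U" "y \<in> U"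
  shows "orbit f y \<subseteq> U"
proof
  fix z assume "z \<in> orbit f y"
  then show "z \<in> U" by (induct rule: orbit.induct) (use assms in blast)+
qed

section \<open>Cycles of a permutation of [n]\<close>

locale perm_of_interval =
  fixes n :: nat and p :: "nat \<Rightarrow> nat"
  assumes perm: "p permutes {1..n}"
begin

abbreviation cycles :: "nat set set" where
  "cycles \<equiv> nontriv_cycles n p"

definition period :: "nat \<Rightarrow> nat" where
  "period x = card (orbit p x)"

definition agree :: "(nat \<Rightarrow> nat) \<Rightarrow> nat set" where
  "agree \<sigma> = {i \<in> moved \<sigma>. p i = \<sigma> i}"

lemma finite_moved_p: "finite (moved p)"
  using finite_moved[OF perm] .

lemma permutation_p: "permutation p"
  using perm by (auto simp: permutation_permutes)

lemma in_orbit_self: "x \<in> orbit p x"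
  by (rule permutation_self_in_orbit[OF permutation_p])

lemma p_eq_iff: "p a = p b \<longleftrightarrow> a = b"
  using permutes_inj[OF perm] unfolding inj_def by metis

lemma p_in_interval: "y \<in> {1..n} \<Longrightarrow> p y \<in> {1..n}"
  using permutes_in_image[OF perm] by blast

lemma orbit_subset_moved: "x \<in> moved p \<Longrightarrow> orbit p x \<subseteq> moved p"
proof
  fix y assume "x \<in> moved p" "y \<in> orbit p x"
  then show "y \<in> moved p"
    by (induct rule: orbit.induct[OF \<open>y \<in> orbit p x\<close>]) (auto simp: moved_def p_eq_iff)
qed

lemma cycles_eq: "cycles = orbit p ` moved p"
  using moved_subset[OF perm] unfolding nontriv_cycles_def moved_def by blast

lemma finite_cycles: "finite cycles"
  using cycles_eq finite_moved_p by simp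

lemma orbit_eq_of_mem: "D \<in> cycles \<Longrightarrow> y \<in> D \<Longrightarrow> D = orbit p y"
  unfolding cycles_eq
  using orbit_cyclic_eq3[OF cyclic_on_orbit'[OF permutation_p]] by blast

lemma cycle_subset_moved: "D \<in> cycles \<Longrightarrow> D \<subseteq> moved p"
  unfolding cycles_eq using orbit_subset_moved by blast

lemma cycle_nonempty: "D \<in> cycles \<Longrightarrow> D \<noteq> {}"
  unfolding cycles_eq using in_orbit_self by blast

lemma finite_cycle: "D \<in> cycles \<Longrightarrow> finite D"
  using cycle_subset_moved finite_moved_p finite_subset by blast

lemma cycle_p_mem_iff: "D \<in> cycles \<Longrightarrow> p y \<in> D \<longleftrightarrow> y \<in> D"
  unfolding cycles_eq
  using cyclic_on_inI[OF cyclic_on_orbit'[OF permutation_p]]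
    cyclic_on_f_in[OF perm cyclic_on_orbit'[OF permutation_p]] by blast

lemma cycles_disjoint: "D1 \<in> cycles \<Longrightarrow> D2 \<in> cycles \<Longrightarrow> y \<in> D1 \<Longrightarrow> y \<in> D2 \<Longrightarrow> D1 = D2"
  using orbit_eq_of_mem by metis

lemma Union_cycles: "\<Union>cycles = moved p"
  unfolding cycles_eq using orbit_subset_moved in_orbit_self by auto

lemma orbit_in_cycles: "x \<in> moved p \<Longrightarrow> orbit p x \<in> cycles"
  unfolding cycles_eq by auto

lemma card_Union_cycles: "F \<subseteq> cycles \<Longrightarrow> card (\<Union>F) = (\<Sum>D\<in>F. card D)"
  by (rule card_Union_disjoint)
    (auto simp: pairwise_def disjnt_def finite_cycle dest: cycles_disjoint)

lemma card_moved_eq_sum_mset: "card (moved p) = sum_mset (cycle_type n p)"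
  using card_Union_cycles[of cycles] Union_cycles
  by (simp add: cycle_type_def sum_unfold_sum_mset)

section \<open>The intersection of the two balls\<close>

lemma agree_subset: "agree \<sigma> \<subseteq> moved \<sigma>" "agree \<sigma> \<subseteq> moved p"
  unfolding agree_def moved_def by auto

lemma finite_agree: "\<sigma> permutes {1..n} \<Longrightarrow> finite (agree \<sigma>)"
  by (rule finite_subset[OF agree_subset(1) finite_moved])

text \<open>If \<sigma> disagrees with p at a single moved point j, then j = \<sigma> z = p z for some
  moved z \<noteq> j, so j is moved by p as well.\<close>
lemma moved_subset_if_one_disagreement:
  assumes s: "\<sigma> permutes {1..n}" and c: "card (agree \<sigma>) + 1 = card (moved \<sigma>)"
  shows "moved \<sigma> \<subseteq> moved p"
proof -
  have "card (moved \<sigma> - agree \<sigma>) = 1"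
    using c card_Diff_subset[OF finite_agree[OF s] agree_subset(1)] by simp
  then obtain j where j: "moved \<sigma> - agree \<sigma> = {j}" by (rule card_1_singletonE)
  obtain z where z: "\<sigma> z = j" using permutes_surj[OF s] by (metis surj_def)
  have "j \<in> moved \<sigma>" using j by blast
  then have "z \<noteq> j" using z by (auto simp: moved_def)
  then have "z \<in> moved \<sigma>" using z by (simp add: moved_def)
  then have "z \<in> agree \<sigma>" using j \<open>z \<noteq> j\<close> by blast
  then have "p z = j" using z by (simp add: agree_def)
  then have "j \<in> moved p" using \<open>z \<noteq> j\<close> p_eq_iff[of z j] by (auto simp: moved_def)
  moreover have "moved \<sigma> \<subseteq> insert j (agree \<sigma>)" using j by blast
  ultimately show ?thesis using agree_subset(2)[of \<sigma>] by blast
qed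

lemma hdist_add_card_agree:
  assumes s: "\<sigma> permutes {1..n}"
  shows "hdist n \<sigma> p + card (agree \<sigma>) = card (moved p) + card (moved \<sigma> - moved p)"
proof -
  have D: "{i \<in> {1..n}. \<sigma> i \<noteq> p i} = (moved p - agree \<sigma>) \<union> (moved \<sigma> - moved p)"
    using moved_subset[OF perm] moved_subset[OF s] by (auto simp: agree_def moved_def)
  have "hdist n \<sigma> p = card (moved p - agree \<sigma>) + card (moved \<sigma> - moved p)"
    unfolding hdist_def D by (rule card_Un_disjoint) (use finite_moved_p finite_moved[OF s] in auto)
  then show ?thesis
    using card_Diff_subset[OF finite_agree[OF s] agree_subset(2)]
      card_mono[OF finite_moved_p agree_subset(2)[of \<sigma>]] by simp
qed

lemma card_agree_add_le:
  assumes s: "\<sigma> permutes {1..n}"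
  shows "card (agree \<sigma>) + card (moved \<sigma> - moved p) \<le> card (moved \<sigma>)"
proof -
  have "card (agree \<sigma> \<union> (moved \<sigma> - moved p)) = card (agree \<sigma>) + card (moved \<sigma> - moved p)"
    by (rule card_Un_disjoint)
      (use finite_agree[OF s] finite_moved[OF s] agree_subset(2)[of \<sigma>] in auto)
  moreover have "card (agree \<sigma> \<union> (moved \<sigma> - moved p)) \<le> card (moved \<sigma>)"
    by (rule card_mono[OF finite_moved[OF s]]) (use agree_subset(1)[of \<sigma>] in auto)
  ultimately show ?thesis by simp
qed

lemma Tc_subset_Tc_p_iff: "\<sigma> permutes {1..n} \<Longrightarrow> Tc n \<sigma> \<subseteq> Tc n p \<longleftrightarrow> agree \<sigma> = moved \<sigma>"
  by (auto simp: Tc_subset_iff agree_def)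

lemma card_Tc_Int_Tc_p: "\<sigma> permutes {1..n} \<Longrightarrow> card (Tc n \<sigma> \<inter> Tc n p) = card (agree \<sigma>)"
  by (simp add: card_Tc_Int agree_def)

lemma mem_N1_iff: "\<sigma> \<in> N1 n r p \<longleftrightarrow> \<sigma> \<in> Sym n \<and> agree \<sigma> = moved \<sigma> \<and> card (moved \<sigma>) = r - 1"
  by (cases "\<sigma> permutes {1..n}") (simp_all add: N1_def Sym_def Tc_subset_Tc_p_iff card_Tc)

lemma mem_N2_iff: "\<sigma> \<in> N2 n r p \<longleftrightarrow> \<sigma> \<in> Sym n \<and> agree \<sigma> = moved \<sigma> \<and> card (moved \<sigma>) = r"
  by (cases "\<sigma> permutes {1..n}") (simp_all add: N2_def Sym_def Tc_subset_Tc_p_iff card_Tc)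

lemma mem_N3_iff: "\<sigma> \<in> N3 n r p \<longleftrightarrow> \<sigma> \<in> Sym n \<and> card (agree \<sigma>) = r - 1 \<and> card (moved \<sigma>) = r"
  by (cases "\<sigma> permutes {1..n}") (simp_all add: N3_def Sym_def card_Tc_Int_Tc_p card_Tc)

lemma ball_Int_ball_id:
  assumes cS: "card (moved p) = 2*r - 1" and r: "r \<ge> 1"
  shows "ball_r n r p \<inter> ball_r n r id = N1 n r p \<union> N2 n r p \<union> N3 n r p"
proof (rule set_eqI)
  fix \<sigma>
  show "\<sigma> \<in> ball_r n r p \<inter> ball_r n r id \<longleftrightarrow> \<sigma> \<in> N1 n r p \<union> N2 n r p \<union> N3 n r p"
  proof (cases "\<sigma> \<in> Sym n")
    case True
    then have s: "\<sigma> permutes {1..n}" by (simp add: Sym_def)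
    have agree_eq: "agree \<sigma> = moved \<sigma> \<longleftrightarrow> card (agree \<sigma>) = card (moved \<sigma>)"
      using card_subset_eq[OF finite_moved[OF s] agree_subset(1)] by auto
    have L: "\<sigma> \<in> ball_r n r p \<inter> ball_r n r id \<longleftrightarrow> hdist n \<sigma> p \<le> r \<and> card (moved \<sigma>) \<le> r"
      using True hdist_id[OF s] by (auto simp: ball_r_def)
    have R: "\<sigma> \<in> N1 n r p \<union> N2 n r p \<union> N3 n r p \<longleftrightarrow>
        (card (agree \<sigma>) = card (moved \<sigma>) \<and> card (moved \<sigma>) = r - 1) \<or>
        (card (agree \<sigma>) = card (moved \<sigma>) \<and> card (moved \<sigma>) = r) \<or>
        (card (agree \<sigma>) = r - 1 \<and> card (moved \<sigma>) = r)"
      using True agree_eq by (auto simp: mem_N1_iff mem_N2_iff mem_N3_iff)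
    have arith: "(h \<le> r \<and> a \<le> r) \<longleftrightarrow> (e = a \<and> a = r - 1) \<or> (e = a \<and> a = r) \<or> (e = r - 1 \<and> a = r)"
      if "h + e = 2*r - 1 + m" "e + m \<le> a" "e \<le> a" "e + 1 = a \<Longrightarrow> m = 0" for h e a m :: nat
      using that r by (cases "e + 1 = a") auto
    have "card (agree \<sigma>) + 1 = card (moved \<sigma>) \<Longrightarrow> card (moved \<sigma> - moved p) = 0"
      using moved_subset_if_one_disagreement[OF s] by (metis Diff_eq_empty_iff card.empty)
    then show ?thesis
      unfolding L R
      by (rule arith[OF hdist_add_card_agree[OF s, unfolded cS] card_agree_add_le[OF s]
            card_mono[OF finite_moved[OF s] agree_subset(1)]])
  qed (simp add: ball_r_def mem_N1_iff mem_N2_iff mem_N3_iff)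
qed

lemma card_ball_Int_ball_id:
  assumes "card (moved p) = 2*r - 1" and r: "r \<ge> 1"
  shows "card (ball_r n r p \<inter> ball_r n r id) = card (N1 n r p) + card (N2 n r p) + card (N3 n r p)"
proof -
  have "finite (Sym n)"
    unfolding Sym_def by (rule finite_permutations) simp
  then have fin: "finite (N1 n r p)" "finite (N2 n r p)" "finite (N3 n r p)"
    unfolding N1_def N2_def N3_def by auto
  have disj: "N1 n r p \<inter> N2 n r p = {}" "(N1 n r p \<union> N2 n r p) \<inter> N3 n r p = {}"
    using r by (auto simp: mem_N1_iff mem_N2_iff mem_N3_iff)
  show ?thesis
    unfolding ball_Int_ball_id[OF assms] by (simp add: card_Un_disjoint fin disj)
qed

section \<open>Permutations agreeing with p wherever they move\<close>

definition inv_sets :: "nat set set" where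
  "inv_sets = {U. U \<subseteq> moved p \<and> p ` U \<subseteq> U}"

definition restr :: "nat set \<Rightarrow> nat \<Rightarrow> nat" where
  "restr U = (\<lambda>y. if y \<in> U then p y else y)"

lemma finite_inv_set: "U \<in> inv_sets \<Longrightarrow> finite U"
  by (rule finite_subset[OF _ finite_moved_p]) (simp add: inv_sets_def)

lemma inv_set_p_mem_iff:
  assumes U: "U \<in> inv_sets"
  shows "p y \<in> U \<longleftrightarrow> y \<in> U"
proof -
  have "inj_on p U" using permutes_inj[OF perm] by (rule inj_on_subset) simp
  then have img: "p ` U = U"
    using endo_inj_surj[OF finite_inv_set[OF U]] U unfolding inv_sets_def by blast
  show ?thesis
  proof
    assume "p y \<in> U"
    then obtain z where "z \<in> U" "p y = p z" using img by (metis imageE)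
    then show "y \<in> U" by (simp add: p_eq_iff)
  qed (use img in blast)
qed

lemma restr_permutes:
  assumes U: "U \<in> inv_sets"
  shows "restr U permutes {1..n}"
proof (rule inj_imp_permutes)
  show "inj_on (restr U) {1..n}"
    by (rule inj_onI)
      (use inv_set_p_mem_iff[OF U] in \<open>auto simp: restr_def p_eq_iff split: if_splits\<close>)
  show "restr U y = y" if "y \<notin> {1..n}" for y
    using that moved_subset[OF perm] U by (auto simp: restr_def inv_sets_def)
  show "restr U y \<in> {1..n}" if "y \<in> {1..n}" for y
    using that p_in_interval by (simp add: restr_def)
qed simp

lemma moved_restr: "U \<in> inv_sets \<Longrightarrow> moved (restr U) = U"
  unfolding moved_def restr_def inv_sets_def by auto

lemma agree_restr: "U \<in> inv_sets \<Longrightarrow> agree (restr U) = moved (restr U)"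
  unfolding agree_def using moved_restr by (auto simp: restr_def)

lemma restr_moved_if_agree:
  assumes s: "\<sigma> permutes {1..n}" and ag: "agree \<sigma> = moved \<sigma>"
  shows "moved \<sigma> \<in> inv_sets" "restr (moved \<sigma>) = \<sigma>"
proof -
  have ag': "p i = \<sigma> i" if "i \<in> moved \<sigma>" for i using ag that by (auto simp: agree_def)
  have "\<sigma> (\<sigma> y) \<noteq> \<sigma> y" if "y \<in> moved \<sigma>" for y
    using that permutes_inj[OF s] by (auto simp: moved_def inj_def)
  then have "p ` moved \<sigma> \<subseteq> moved \<sigma>" using ag' by (auto simp: moved_def)
  moreover have "moved \<sigma> \<subseteq> moved p" using ag agree_subset(2) by metis
  ultimately show "moved \<sigma> \<in> inv_sets" unfolding inv_sets_def by blast
  show "restr (moved \<sigma>) = \<sigma>" using ag' by (auto simp: restr_def moved_def)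
qed

lemma card_agreeing_eq_card_inv_sets:
  "card {\<sigma> \<in> Sym n. agree \<sigma> = moved \<sigma> \<and> card (moved \<sigma>) = m} = card {U \<in> inv_sets. card U = m}"
proof -
  have "{\<sigma> \<in> Sym n. agree \<sigma> = moved \<sigma> \<and> card (moved \<sigma>) = m} = restr ` {U \<in> inv_sets. card U = m}"
  proof (rule set_eqI, rule iffI)
    fix \<sigma> assume "\<sigma> \<in> {\<sigma> \<in> Sym n. agree \<sigma> = moved \<sigma> \<and> card (moved \<sigma>) = m}"
    then have "\<sigma> permutes {1..n}" "agree \<sigma> = moved \<sigma>" "card (moved \<sigma>) = m"
      by (auto simp: Sym_def)
    then show "\<sigma> \<in> restr ` {U \<in> inv_sets. card U = m}"
      using restr_moved_if_agree by (metis (mono_tags, lifting) image_eqI mem_Collect_eq)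
  next
    fix \<sigma> assume "\<sigma> \<in> restr ` {U \<in> inv_sets. card U = m}"
    then obtain U where "U \<in> inv_sets" "card U = m" "\<sigma> = restr U" by blast
    then show "\<sigma> \<in> {\<sigma> \<in> Sym n. agree \<sigma> = moved \<sigma> \<and> card (moved \<sigma>) = m}"
      using restr_permutes agree_restr moved_restr by (simp add: Sym_def)
  qed
  moreover have "inj_on restr {U \<in> inv_sets. card U = m}"
    by (rule inj_onI) (metis (no_types, lifting) mem_Collect_eq moved_restr)
  ultimately show ?thesis by (simp add: card_image)
qed

lemma Union_in_inv_sets: "F \<subseteq> cycles \<Longrightarrow> \<Union>F \<in> inv_sets"
  unfolding inv_sets_def using cycle_subset_moved cycle_p_mem_iff by blast

lemma inj_on_Union_cycles: "inj_on Union (Pow cycles)"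
proof -
  have sub: "F1 \<subseteq> F2" if F: "F1 \<subseteq> cycles" "F2 \<subseteq> cycles" "\<Union>F1 = \<Union>F2" for F1 F2
  proof
    fix D assume D: "D \<in> F1"
    then obtain y where y: "y \<in> D" using cycle_nonempty F(1) by blast
    then obtain D' where "D' \<in> F2" "y \<in> D'" using F(3) D by blast
    then show "D \<in> F2" using cycles_disjoint[of D D' y] F D y by blast
  qed
  show ?thesis
  proof (rule inj_onI)
    fix F1 F2 assume "F1 \<in> Pow cycles" "F2 \<in> Pow cycles" "\<Union>F1 = \<Union>F2"
    then show "F1 = F2" using sub[of F1 F2] sub[of F2 F1] by auto
  qed
qed

lemma inv_set_eq_Union_cycles:
  assumes U: "U \<in> inv_sets" and Y: "Y \<subseteq> cycles" "U \<subseteq> \<Union>Y"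
  shows "U = \<Union>{D \<in> Y. D \<subseteq> U}"
proof
  show "U \<subseteq> \<Union>{D \<in> Y. D \<subseteq> U}"
  proof
    fix z assume z: "z \<in> U"
    then obtain D where D: "D \<in> Y" "z \<in> D" using Y by blast
    then have "D = orbit p z" using orbit_eq_of_mem[OF subsetD[OF Y(1)]] by blast
    moreover have "orbit p z \<subseteq> U"
      using U z by (intro orbit_subset_if_image_subset) (auto simp: inv_sets_def)
    ultimately show "z \<in> \<Union>{D \<in> Y. D \<subseteq> U}" using D by blast
  qed
qed blast

text \<open>Invariant subsets of a union of cycles are exactly the unions of subfamilies.\<close>
lemma card_inv_sets_within:
  assumes Y: "Y \<subseteq> cycles"
  shows "card {U \<in> inv_sets. U \<subseteq> \<Union>Y \<and> P (card U)} = card {F. F \<subseteq> Y \<and> P (sum card F)}"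
proof -
  have "{U \<in> inv_sets. U \<subseteq> \<Union>Y \<and> P (card U)} = Union ` {F. F \<subseteq> Y \<and> P (sum card F)}"
  proof (rule set_eqI, rule iffI)
    fix U assume "U \<in> {U \<in> inv_sets. U \<subseteq> \<Union>Y \<and> P (card U)}"
    then have U: "U \<in> inv_sets" "U \<subseteq> \<Union>Y" "P (card U)" by auto
    define F where "F = {D \<in> Y. D \<subseteq> U}"
    have "U = \<Union>F" unfolding F_def by (rule inv_set_eq_Union_cycles[OF U(1) Y U(2)])
    moreover have "F \<subseteq> Y" unfolding F_def by blast
    moreover have "card (\<Union>F) = sum card F" using card_Union_cycles \<open>F \<subseteq> Y\<close> Y by blast
    ultimately show "U \<in> Union ` {F. F \<subseteq> Y \<and> P (sum card F)}" using U(3) by auto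
  next
    fix U assume "U \<in> Union ` {F. F \<subseteq> Y \<and> P (sum card F)}"
    then obtain F where F: "F \<subseteq> Y" "P (sum card F)" "U = \<Union>F" by blast
    have "card (\<Union>F) = sum card F" using card_Union_cycles F Y by blast
    then show "U \<in> {U \<in> inv_sets. U \<subseteq> \<Union>Y \<and> P (card U)}"
      using F Union_in_inv_sets[of F] Y by auto
  qed
  moreover have "inj_on Union {F. F \<subseteq> Y \<and> P (sum card F)}"
    by (rule inj_on_subset[OF inj_on_Union_cycles]) (use Y in auto)
  ultimately show ?thesis by (simp add: card_image)
qed

lemma card_agreeing:
  "card {\<sigma> \<in> Sym n. agree \<sigma> = moved \<sigma> \<and> card (moved \<sigma>) = m} = card {F. F \<subseteq> cycles \<and> sum card F = m}"
proof -
  have "{U \<in> inv_sets. card U = m} = {U \<in> inv_sets. U \<subseteq> \<Union>cycles \<and> card U = m}"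
    using Union_cycles unfolding inv_sets_def by blast
  then show ?thesis
    using card_agreeing_eq_card_inv_sets card_inv_sets_within[of cycles "\<lambda>c. c = m"] by simp
qed

section \<open>Shortcuts of a cycle\<close>

lemma orbit_conv_funpow_period:
  "orbit p x = (\<lambda>i. (p^^i) x) ` {..<period x} \<and> inj_on (\<lambda>i. (p^^i) x) {..<period x}
     \<and> (p^^period x) x = x"
proof -
  define d where "d = funpow_dist1 p x x"
  have e: "orbit p x = (\<lambda>i. (p^^i) x) ` {..<d}"
    using orbit_conv_funpow_dist1[OF in_orbit_self] unfolding d_def atLeast0LessThan .
  have i: "inj_on (\<lambda>i. (p^^i) x) {..<d}"
    using inj_on_funpow_dist1[OF in_orbit_self] unfolding d_def atLeast0LessThan .
  have "(p^^d) x = x" unfolding d_def by (rule funpow_dist1_prop[OF in_orbit_self])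
  moreover have "period x = d" unfolding period_def e using card_image[OF i] by simp
  ultimately show ?thesis using e i by (simp only:)
qed

lemma funpow_period: "(p^^period x) x = x"
  using orbit_conv_funpow_period by blast

lemma inj_on_funpow_period: "inj_on (\<lambda>i. (p^^i) x) {..<period x}"
  using orbit_conv_funpow_period by blast

lemma funpow_eq_iff: "i < period x \<Longrightarrow> j < period x \<Longrightarrow> (p^^i) x = (p^^j) x \<longleftrightarrow> i = j"
  using inj_on_funpow_period[of x] unfolding inj_on_def by blast

lemma mem_orbit_funpow: "y \<in> orbit p x \<Longrightarrow> \<exists>i < period x. y = (p^^i) x"
  using orbit_conv_funpow_period[of x] by blast

lemma period_pos: "period x > 0"
  unfolding period_def using in_orbit_self finite_orbit[OF in_orbit_self] card_gt_0_iff by blast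

lemma funpow_mem_orbit: "(p^^i) x \<in> orbit p x"
  using funpow_in_orbit[OF in_orbit_self] .

definition arc :: "nat \<Rightarrow> nat \<Rightarrow> nat set" where
  "arc x m = (\<lambda>i. (p^^i) x) ` {..<m}"

text \<open>For 2 \<le> k < period x, the permutation below closes the first k points of the cycle of x
  into a k-cycle and acts as p on an invariant set U off that cycle: it agrees with p at every
  point it moves except the last point of the arc.\<close>
definition shortcut :: "nat \<Rightarrow> nat \<Rightarrow> nat set \<Rightarrow> nat \<Rightarrow> nat" where
  "shortcut x k U = (\<lambda>y. if y \<in> U \<or> y \<in> arc x (k-1) then p y
     else if y = (p^^(k-1)) x then x else y)"

lemma arc_subset_orbit: "arc x m \<subseteq> orbit p x"
  unfolding arc_def using funpow_mem_orbit by blast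

lemma card_arc: "m \<le> period x \<Longrightarrow> card (arc x m) = m"
  unfolding arc_def by (subst card_image) (auto intro: inj_on_subset[OF inj_on_funpow_period])

lemma funpow_mem_arc_iff: "m \<le> period x \<Longrightarrow> i < period x \<Longrightarrow> (p^^i) x \<in> arc x m \<longleftrightarrow> i < m"
proof
  assume a: "m \<le> period x" "i < period x" "(p^^i) x \<in> arc x m"
  then obtain j where "j < m" "(p^^i) x = (p^^j) x" unfolding arc_def by blast
  then show "i < m" using funpow_eq_iff[of i x j] a by auto
qed (auto simp: arc_def)

lemma arc_Suc: "arc x (Suc m) = insert ((p^^m) x) (arc x m)"
  unfolding arc_def lessThan_Suc by simp

context
  fixes x k U
  assumes x: "x \<in> moved p" and k: "2 \<le> k" "k < period x"
    and U: "U \<in> inv_sets" "U \<inter> orbit p x = {}"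
begin

lemma mod_less_period: "m mod k < period x"
proof -
  have "m mod k < k" using k by simp
  then show ?thesis using k by linarith
qed

lemma shortcut_funpow: "i < k \<Longrightarrow> shortcut x k U ((p^^i) x) = (p^^(Suc i mod k)) x"
proof -
  assume i: "i < k"
  have "(p^^i) x \<notin> U" using U(2) funpow_mem_orbit by blast
  moreover have "(p^^i) x \<in> arc x (k-1) \<longleftrightarrow> i < k - 1"
    using funpow_mem_arc_iff[of "k-1" x i] k i by simp
  ultimately show ?thesis
    using i k by (cases "i < k - 1") (auto simp: shortcut_def mod_Suc)
qed

lemma shortcut_inv_set: "y \<in> U \<Longrightarrow> shortcut x k U y = p y"
  unfolding shortcut_def by simp

lemma shortcut_outside: "y \<notin> U \<Longrightarrow> y \<notin> arc x k \<Longrightarrow> shortcut x k U y = y"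
  using arc_Suc[of x "k-1"] k unfolding shortcut_def by auto

lemma shortcut_maps_arc: "y \<in> arc x k \<Longrightarrow> shortcut x k U y \<in> arc x k"
  using shortcut_funpow k unfolding arc_def by auto

lemma inj_on_shortcut_arc: "inj_on (shortcut x k U) (arc x k)"
proof (rule inj_onI)
  fix y1 y2 assume a: "y1 \<in> arc x k" "y2 \<in> arc x k" "shortcut x k U y1 = shortcut x k U y2"
  then obtain i j where ij: "i < k" "j < k" "y1 = (p^^i) x" "y2 = (p^^j) x"
    unfolding arc_def by blast
  note mod_less_period[of "Suc i"] mod_less_period[of "Suc j"]
  moreover have "(p^^(Suc i mod k)) x = (p^^(Suc j mod k)) x" using a ij shortcut_funpow by simp
  ultimately have "Suc i mod k = Suc j mod k" using funpow_eq_iff by blast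
  then have "i = j" using ij(1,2) by (auto simp: mod_Suc split: if_splits)
  then show "y1 = y2" using ij by simp
qed

lemma shortcut_maps_inv_set: "y \<in> U \<Longrightarrow> shortcut x k U y \<in> U"
  using shortcut_inv_set U(1) by (auto simp: inv_sets_def)

lemma inj_shortcut: "inj (shortcut x k U)"
proof (rule injI)
  fix y1 y2 assume eq: "shortcut x k U y1 = shortcut x k U y2"
  have disj: "U \<inter> arc x k = {}" using U(2) arc_subset_orbit by blast
  have out: "y \<notin> U \<Longrightarrow> y \<notin> arc x k \<Longrightarrow> shortcut x k U y \<notin> U \<union> arc x k" for y
    using shortcut_outside by simp
  consider "y1 \<in> U" | "y1 \<in> arc x k" | "y1 \<notin> U" "y1 \<notin> arc x k" by blast
  then show "y1 = y2"
  proof cases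
    case 1
    then have "y2 \<in> U"
      using eq shortcut_maps_inv_set out shortcut_maps_arc disj by (metis UnCI disjoint_iff)
    then show ?thesis using eq 1 shortcut_inv_set by (simp add: p_eq_iff)
  next
    case 2
    then have "y2 \<in> arc x k"
      using eq shortcut_maps_inv_set out shortcut_maps_arc disj by (metis UnCI disjoint_iff)
    then show ?thesis using inj_on_shortcut_arc 2 eq by (auto dest: inj_onD)
  next
    case 3
    then have "y2 \<notin> U" "y2 \<notin> arc x k"
      using eq shortcut_maps_inv_set out shortcut_maps_arc by (metis UnCI)+
    then show ?thesis using eq 3 shortcut_outside by simp
  qed
qed

lemma shortcut_permutes: "shortcut x k U permutes {1..n}"
proof (rule inj_imp_permutes)
  have "U \<union> arc x k \<subseteq> moved p"
    using U(1) arc_subset_orbit[of x k] orbit_subset_moved[OF x] by (auto simp: inv_sets_def)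
  then have moved: "U \<union> arc x k \<subseteq> {1..n}" using moved_subset[OF perm] by blast
  show "inj_on (shortcut x k U) {1..n}" using inj_shortcut by (rule inj_on_subset) simp
  show "shortcut x k U y \<in> {1..n}" if "y \<in> {1..n}" for y
  proof (cases "y \<in> U \<or> y \<in> arc x k")
    case True
    then show ?thesis using moved shortcut_maps_inv_set shortcut_maps_arc by blast
  qed (use that shortcut_outside in simp)
  show "shortcut x k U y = y" if "y \<notin> {1..n}" for y
    using that moved shortcut_outside by blast
qed simp

lemma moved_shortcut: "moved (shortcut x k U) = U \<union> arc x k"
proof (rule set_eqI)
  fix y
  show "y \<in> moved (shortcut x k U) \<longleftrightarrow> y \<in> U \<union> arc x k"
  proof (cases "y \<in> arc x k")
    case True
    then obtain i where i: "i < k" "y = (p^^i) x" unfolding arc_def by blast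
    have "Suc i mod k \<noteq> i" using i(1) k by (auto simp: mod_Suc)
    moreover have "Suc i mod k < period x" "i < period x"
      using mod_less_period k i(1) by auto
    ultimately have "(p^^(Suc i mod k)) x \<noteq> (p^^i) x" using funpow_eq_iff by blast
    then show ?thesis using True shortcut_funpow[OF i(1)] i(2) unfolding moved_def by simp
  next
    case False
    then show ?thesis
      using shortcut_inv_set shortcut_outside U(1) by (auto simp: moved_def inv_sets_def)
  qed
qed

lemma last_of_arc: "(p^^(k-1)) x \<in> arc x k" "(p^^(k-1)) x \<notin> U \<union> arc x (k-1)"
    "shortcut x k U ((p^^(k-1)) x) = x"
proof -
  show "(p^^(k-1)) x \<in> arc x k" unfolding arc_def using k by auto
  show "(p^^(k-1)) x \<notin> U \<union> arc x (k-1)"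
    using U(2) funpow_mem_orbit funpow_mem_arc_iff[of "k-1" x "k-1"] k by auto
  show "shortcut x k U ((p^^(k-1)) x) = x" using shortcut_funpow[of "k-1"] k by simp
qed

lemma agree_shortcut: "agree (shortcut x k U) = U \<union> arc x (k-1)"
proof -
  let ?s = "shortcut x k U" and ?z = "(p^^(k-1)) x"
  have arc_k: "arc x k = insert ?z (arc x (k-1))" using arc_Suc[of x "k-1"] k by simp
  have "p ?z = (p^^k) x" using k by (cases k) auto
  moreover have "(p^^k) x \<noteq> x" using funpow_eq_iff[of k x 0] k by simp
  ultimately have "?z \<notin> agree ?s" using last_of_arc(3) by (simp add: agree_def)
  moreover have "U \<union> arc x (k-1) \<subseteq> agree ?s"
    using moved_shortcut arc_k unfolding agree_def shortcut_def by auto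
  moreover have "agree ?s \<subseteq> insert ?z (U \<union> arc x (k-1))"
    using agree_subset(1)[of ?s] moved_shortcut arc_k by blast
  ultimately show ?thesis by blast
qed

lemma card_moved_shortcut: "card (moved (shortcut x k U)) = card U + k"
  and card_agree_shortcut: "card (agree (shortcut x k U)) + 1 = card U + k"
proof -
  have fU: "finite U" using finite_inv_set U(1) by blast
  have d: "U \<inter> arc x m = {}" for m using U(2) arc_subset_orbit by blast
  show "card (moved (shortcut x k U)) = card U + k" unfolding moved_shortcut
    by (subst card_Un_disjoint) (use fU d card_arc[of k x] k in \<open>auto simp: arc_def\<close>)
  show "card (agree (shortcut x k U)) + 1 = card U + k" unfolding agree_shortcut
    by (subst card_Un_disjoint) (use fU d card_arc[of "k-1" x] k in \<open>auto simp: arc_def\<close>)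
qed

end

end

text \<open>Conversely, let \<sigma> agree with p at all but one point, the defect, of the points it moves.
  Starting from start = \<sigma> defect, the cycle of p runs through moved points until it reaches the
  defect after dist steps and leaves the moved points right after; off that cycle \<sigma> is p on rest.\<close>
locale one_disagreement = perm_of_interval +
  fixes \<sigma> :: "nat \<Rightarrow> nat"
  assumes \<sigma>_permutes: "\<sigma> permutes {1..n}"
    and card_agree_\<sigma>: "card (agree \<sigma>) + 1 = card (moved \<sigma>)"
begin

definition defect :: nat where
  "defect = (THE j. moved \<sigma> - agree \<sigma> = {j})"

definition start :: nat where
  "start = \<sigma> defect"

definition dist :: nat where
  "dist = (LEAST i. (p^^i) start = defect)"

definition rest :: "nat set" where
  "rest = moved \<sigma> - orbit p start"

lemma moved_diff_agree: "moved \<sigma> - agree \<sigma> = {defect}"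
proof -
  have "card (moved \<sigma> - agree \<sigma>) = 1"
    using card_agree_\<sigma> card_Diff_subset[OF finite_agree[OF \<sigma>_permutes] agree_subset(1)] by simp
  then obtain j where j: "moved \<sigma> - agree \<sigma> = {j}" by (rule card_1_singletonE)
  then have "defect = j" unfolding defect_def by (rule the_equality) (use j in auto)
  then show ?thesis using j by simp
qed

lemma moved_\<sigma>_subset: "moved \<sigma> \<subseteq> moved p"
  by (rule moved_subset_if_one_disagreement[OF \<sigma>_permutes card_agree_\<sigma>])

lemma \<sigma>_eq_iff: "\<sigma> a = \<sigma> b \<longleftrightarrow> a = b"
  using permutes_inj[OF \<sigma>_permutes] unfolding inj_def by metis

lemma mem_moved_\<sigma>: "y \<in> moved \<sigma> \<longleftrightarrow> \<sigma> y \<noteq> y"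
  unfolding moved_def by simp

lemma mem_agree: "y \<in> agree \<sigma> \<longleftrightarrow> \<sigma> y \<noteq> y \<and> p y = \<sigma> y"
  unfolding agree_def moved_def by simp

lemma agree_if_ne_defect: "y \<in> moved \<sigma> \<Longrightarrow> y \<noteq> defect \<Longrightarrow> y \<in> agree \<sigma>"
  using moved_diff_agree by blast

lemma defect_moved: "defect \<in> moved \<sigma>" "defect \<notin> agree \<sigma>"
  using moved_diff_agree by blast+

lemma start_ne_defect: "start \<noteq> defect"
  using defect_moved(1) mem_moved_\<sigma> start_def by simp

lemma start_moved: "start \<in> moved \<sigma>"
  using start_ne_defect mem_moved_\<sigma> \<sigma>_eq_iff start_def by simp

lemma p_agree_moved: "y \<in> agree \<sigma> \<Longrightarrow> p y \<in> moved \<sigma>"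
  using mem_agree mem_moved_\<sigma> \<sigma>_eq_iff by metis

lemma p_agree_ne_start: "e \<in> agree \<sigma> \<Longrightarrow> p e \<noteq> start"
  using mem_agree \<sigma>_eq_iff defect_moved(2) start_def by metis

lemma p_preimage_in_agree: "y \<in> moved \<sigma> \<Longrightarrow> y \<noteq> start \<Longrightarrow> \<exists>e\<in>agree \<sigma>. p e = y"
proof -
  assume y: "y \<in> moved \<sigma>" "y \<noteq> start"
  obtain z where z: "\<sigma> z = y" using permutes_surj[OF \<sigma>_permutes] by (metis surj_def)
  have "z \<in> moved \<sigma>" using z y mem_moved_\<sigma> by metis
  moreover have "z \<noteq> defect" using z y start_def by auto
  ultimately have "z \<in> agree \<sigma>" by (rule agree_if_ne_defect)
  then show ?thesis using z mem_agree by blast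
qed

lemma p_defect_not_moved: "p defect \<notin> moved \<sigma>"
proof
  assume "p defect \<in> moved \<sigma>"
  moreover have "p defect \<noteq> start"
    using defect_moved mem_agree start_def by (simp add: mem_moved_\<sigma>)
  ultimately obtain e where "e \<in> agree \<sigma>" "p e = p defect" using p_preimage_in_agree by blast
  then show False using defect_moved(2) p_eq_iff by metis
qed

lemma funpow_start_moved:
  assumes "\<And>i. i < m \<Longrightarrow> (p^^i) start \<noteq> defect"
  shows "(p^^m) start \<in> moved \<sigma>"
  using assms
proof (induction m)
  case 0 then show ?case using start_moved by simp
next
  case (Suc m)
  then have "(p^^m) start \<in> agree \<sigma>" using agree_if_ne_defect by simp
  then show ?case using p_agree_moved by simp
qed

lemma reaches_defect: "\<exists>i < period start. (p^^i) start = defect"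
proof (rule ccontr)
  assume nex: "\<not> (\<exists>i < period start. (p^^i) start = defect)"
  let ?L = "period start"
  have "(p^^(?L - 1)) start \<in> agree \<sigma>"
    using funpow_start_moved[of "?L - 1"] nex period_pos[of start] agree_if_ne_defect by simp
  moreover have "p ((p^^(?L - 1)) start) = start"
    using funpow_period[of start] period_pos[of start] by (cases ?L) auto
  ultimately show False using p_agree_ne_start by blast
qed

lemma funpow_dist: "(p^^dist) start = defect" "dist < period start"
proof -
  obtain i0 where i0: "i0 < period start" "(p^^i0) start = defect" using reaches_defect by blast
  show "(p^^dist) start = defect" unfolding dist_def by (rule LeastI[of _ i0]) (rule i0(2))
  have "dist \<le> i0" unfolding dist_def by (rule Least_le) (rule i0(2))
  then show "dist < period start" using i0 by linarith
qed

lemma funpow_before_dist: "i < dist \<Longrightarrow> (p^^i) start \<noteq> defect"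
  unfolding dist_def using not_less_Least by blast

lemma funpow_upto_dist_moved: "i \<le> dist \<Longrightarrow> (p^^i) start \<in> moved \<sigma>"
  by (rule funpow_start_moved) (use funpow_before_dist in simp)

lemma dist_pos: "1 \<le> dist"
  using funpow_dist(1) start_ne_defect by (cases dist) auto

lemma Suc_dist_less_period: "Suc dist < period start"
proof -
  have "(p^^Suc dist) start = p defect" using funpow_dist(1) by simp
  then have "Suc dist \<noteq> period start"
    using p_defect_not_moved start_moved funpow_period[of start] by metis
  then show ?thesis using funpow_dist(2) by simp
qed

lemma funpow_after_dist_not_moved: "m < period start \<Longrightarrow> dist < m \<Longrightarrow> (p^^m) start \<notin> moved \<sigma>"
proof (induction m)
  case (Suc m)
  show ?case
  proof (cases "m = dist")
    case True then show ?thesis using funpow_dist(1) p_defect_not_moved by simp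
  next
    case False
    then have IH: "(p^^m) start \<notin> moved \<sigma>" using Suc by simp
    show ?thesis
    proof
      assume a: "(p^^Suc m) start \<in> moved \<sigma>"
      have "(p^^Suc m) start \<noteq> (p^^0) start"
        using funpow_eq_iff[of "Suc m" start 0] Suc.prems by simp
      then obtain e where "e \<in> agree \<sigma>" "p e = (p^^Suc m) start"
        using p_preimage_in_agree a by auto
      then have "e = (p^^m) start" using p_eq_iff by simp
      then show False using \<open>e \<in> agree \<sigma>\<close> agree_subset(1) IH by blast
    qed
  qed
qed simp

lemma moved_Int_orbit: "moved \<sigma> \<inter> orbit p start = arc start (Suc dist)"
proof
  show "moved \<sigma> \<inter> orbit p start \<subseteq> arc start (Suc dist)"
  proof
    fix y assume y: "y \<in> moved \<sigma> \<inter> orbit p start"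
    then obtain i where i: "i < period start" "y = (p^^i) start" using mem_orbit_funpow by blast
    then have "i \<le> dist" using funpow_after_dist_not_moved y by (meson IntD1 not_le)
    then show "y \<in> arc start (Suc dist)" using i unfolding arc_def by auto
  qed
  show "arc start (Suc dist) \<subseteq> moved \<sigma> \<inter> orbit p start"
    unfolding arc_def using funpow_upto_dist_moved funpow_mem_orbit by auto
qed

lemma defect_in_orbit: "defect \<in> orbit p start"
  using funpow_dist(1) funpow_mem_orbit by metis

lemma rest_inv_set: "rest \<in> inv_sets"
proof -
  have "p y \<in> rest" if "y \<in> rest" for y
  proof -
    have "y \<in> agree \<sigma>"
      using that defect_in_orbit agree_if_ne_defect unfolding rest_def by blast
    then have "p y \<in> moved \<sigma>" by (rule p_agree_moved)
    moreover have "p y \<notin> orbit p start"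
      using that cycle_p_mem_iff[OF orbit_in_cycles[OF subsetD[OF moved_\<sigma>_subset start_moved]]]
      unfolding rest_def by blast
    ultimately show ?thesis unfolding rest_def by blast
  qed
  then show ?thesis using moved_\<sigma>_subset unfolding inv_sets_def rest_def by blast
qed

lemma moved_eq_rest_Un_arc: "moved \<sigma> = rest \<union> arc start (Suc dist)"
  using moved_Int_orbit unfolding rest_def by blast

lemma card_rest: "card rest + Suc dist = card (moved \<sigma>)"
proof -
  have "rest \<inter> arc start (Suc dist) = {}"
    using arc_subset_orbit unfolding rest_def by blast
  then have "card (moved \<sigma>) = card rest + card (arc start (Suc dist))"
    unfolding moved_eq_rest_Un_arc
    by (intro card_Un_disjoint) (auto simp: rest_def arc_def finite_moved[OF \<sigma>_permutes])
  then show ?thesis using card_arc[of "Suc dist" start] Suc_dist_less_period by simp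
qed

lemma \<sigma>_eq_shortcut: "\<sigma> = shortcut start (Suc dist) rest"
proof
  fix y
  have arc_Suc_dist: "arc start (Suc dist) = insert defect (arc start dist)"
    using arc_Suc funpow_dist(1) by simp
  consider "y \<in> rest" | "y \<in> arc start dist" | "y = defect" | "y \<notin> moved \<sigma>"
    using moved_eq_rest_Un_arc arc_Suc_dist by blast
  then show "\<sigma> y = shortcut start (Suc dist) rest y"
  proof cases
    case 1
    then have "y \<in> agree \<sigma>" using defect_in_orbit agree_if_ne_defect unfolding rest_def by blast
    then show ?thesis using 1 mem_agree by (simp add: shortcut_def)
  next
    case 2
    then obtain i where "i < dist" "y = (p^^i) start" unfolding arc_def by blast
    then have "y \<in> agree \<sigma>"
      using agree_if_ne_defect funpow_upto_dist_moved funpow_before_dist by simp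
    then show ?thesis using 2 mem_agree by (simp add: shortcut_def)
  next
    case 3
    have "defect \<notin> rest" using defect_in_orbit by (simp add: rest_def)
    moreover have "defect \<notin> arc start dist"
      using funpow_mem_arc_iff[of dist start dist] funpow_dist by simp
    ultimately show ?thesis using 3 funpow_dist(1) by (simp add: shortcut_def start_def)
  next
    case 4
    then have "y \<notin> rest" "y \<notin> arc start (Suc dist)" using moved_eq_rest_Un_arc by blast+
    then show ?thesis
      using 4 arc_Suc_dist funpow_dist(1) by (auto simp: shortcut_def mem_moved_\<sigma>)
  qed
qed

end

context perm_of_interval
begin

lemma shortcut_determines_params:
  assumes "x \<in> moved p" "2 \<le> k" "k < period x" "U \<in> inv_sets" "U \<inter> orbit p x = {}"
  shows "moved (shortcut x k U) - agree (shortcut x k U) = {(p^^(k-1)) x}"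
    and "shortcut x k U ((p^^(k-1)) x) = x"
    and "card (moved (shortcut x k U) \<inter> orbit p x) = k"
    and "U = moved (shortcut x k U) - orbit p x"
proof -
  note last = last_of_arc[OF assms] and arc_orbit = arc_subset_orbit[of x]
  have arc_k: "arc x k = insert ((p^^(k-1)) x) (arc x (k-1))"
    using arc_Suc[of x "k-1"] assms(2) by simp
  show "moved (shortcut x k U) - agree (shortcut x k U) = {(p^^(k-1)) x}"
    unfolding moved_shortcut[OF assms] agree_shortcut[OF assms] using last arc_k by auto
  show "shortcut x k U ((p^^(k-1)) x) = x" by (rule last(3))
  have "moved (shortcut x k U) \<inter> orbit p x = arc x k"
    unfolding moved_shortcut[OF assms] using assms(5) arc_orbit by blast
  then show "card (moved (shortcut x k U) \<inter> orbit p x) = k" using card_arc assms(3) by simp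
  show "U = moved (shortcut x k U) - orbit p x"
    unfolding moved_shortcut[OF assms] using assms(5) arc_orbit by blast
qed

lemma shortcut_inj:
  assumes h1: "x1 \<in> moved p" "2 \<le> k1" "k1 < period x1" "U1 \<in> inv_sets" "U1 \<inter> orbit p x1 = {}"
    and h2: "x2 \<in> moved p" "2 \<le> k2" "k2 < period x2" "U2 \<in> inv_sets" "U2 \<inter> orbit p x2 = {}"
    and eq: "shortcut x1 k1 U1 = shortcut x2 k2 U2"
  shows "x1 = x2 \<and> k1 = k2 \<and> U1 = U2"
proof -
  note d1 = shortcut_determines_params[OF h1] and d2 = shortcut_determines_params[OF h2]
  have "(p^^(k1-1)) x1 = (p^^(k2-1)) x2" using d1(1) d2(1) eq by simp
  then have "x1 = x2" using d1(2) d2(2) eq by metis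
  then show ?thesis using d1(3,4) d2(3,4) eq by metis
qed

definition shortcut_params :: "nat \<Rightarrow> (nat \<times> nat \<times> nat set) set" where
  "shortcut_params r = (SIGMA x:moved p. SIGMA k:{2..<period x}.
     {U \<in> inv_sets. U \<inter> orbit p x = {} \<and> card U + k = r})"

lemma N3_eq_image_shortcut:
  assumes r: "r \<ge> 1"
  shows "N3 n r p = (\<lambda>(x, k, U). shortcut x k U) ` shortcut_params r"
proof (rule set_eqI, rule iffI)
  fix \<sigma> assume "\<sigma> \<in> N3 n r p"
  then have s: "\<sigma> permutes {1..n}" and c: "card (agree \<sigma>) + 1 = card (moved \<sigma>)" "card (moved \<sigma>) = r"
    using r by (auto simp: mem_N3_iff Sym_def)
  interpret one_disagreement n p \<sigma> by unfold_locales (use s c in auto)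
  have "(start, Suc dist, rest) \<in> shortcut_params r"
    unfolding shortcut_params_def using moved_\<sigma>_subset start_moved dist_pos Suc_dist_less_period
      rest_inv_set card_rest c(2) by (auto simp: rest_def)
  then show "\<sigma> \<in> (\<lambda>(x, k, U). shortcut x k U) ` shortcut_params r"
    using \<sigma>_eq_shortcut by force
next
  fix \<sigma> assume "\<sigma> \<in> (\<lambda>(x, k, U). shortcut x k U) ` shortcut_params r"
  then obtain x k U where t: "x \<in> moved p" "2 \<le> k" "k < period x" "U \<in> inv_sets"
    "U \<inter> orbit p x = {}" "card U + k = r" "\<sigma> = shortcut x k U"
    unfolding shortcut_params_def by auto
  then show "\<sigma> \<in> N3 n r p"
    using shortcut_permutes[OF t(1-5)] card_moved_shortcut[OF t(1-5)] card_agree_shortcut[OF t(1-5)]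
    by (simp add: mem_N3_iff Sym_def)
qed

lemma inj_on_shortcut_params: "inj_on (\<lambda>(x, k, U). shortcut x k U) (shortcut_params r)"
  by (rule inj_onI) (auto simp: shortcut_params_def dest: shortcut_inj)

lemma sum_moved_conv_cycles: "(\<Sum>x\<in>moved p. g (orbit p x)) = (\<Sum>C\<in>cycles. card C * g C)"
proof -
  have "(\<Sum>x\<in>moved p. g (orbit p x)) = (\<Sum>C\<in>cycles. \<Sum>x\<in>C. g (orbit p x))"
    unfolding Union_cycles[symmetric]
    by (subst sum.Union_disjoint) (auto simp: finite_cycle dest: cycles_disjoint)
  also have "\<dots> = (\<Sum>C\<in>cycles. card C * g C)"
  proof (rule sum.cong[OF refl])
    fix C assume C: "C \<in> cycles"
    have "(\<Sum>x\<in>C. g (orbit p x)) = (\<Sum>x\<in>C. g C)"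
      by (rule sum.cong[OF refl]) (use orbit_eq_of_mem[OF C] in auto)
    then show "(\<Sum>x\<in>C. g (orbit p x)) = card C * g C" by simp
  qed
  finally show ?thesis .
qed

lemma card_inv_sets_off_orbit:
  assumes x: "x \<in> moved p"
  shows "card {U \<in> inv_sets. U \<inter> orbit p x = {} \<and> card U + k = r}
    = card {F. F \<subseteq> cycles - {orbit p x} \<and> sum card F + k = r}"
proof -
  have C: "orbit p x \<in> cycles" by (rule orbit_in_cycles[OF x])
  have "\<Union>(cycles - {orbit p x}) = moved p - orbit p x"
  proof
    show "\<Union>(cycles - {orbit p x}) \<subseteq> moved p - orbit p x"
    proof
      fix y assume "y \<in> \<Union>(cycles - {orbit p x})"
      then obtain D where D: "D \<in> cycles" "D \<noteq> orbit p x" "y \<in> D" by blast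
      then have "y \<notin> orbit p x" using cycles_disjoint[OF D(1) C] by blast
      then show "y \<in> moved p - orbit p x" using cycle_subset_moved[OF D(1)] D(3) by blast
    qed
    show "moved p - orbit p x \<subseteq> \<Union>(cycles - {orbit p x})" using Union_cycles by blast
  qed
  then have "{U \<in> inv_sets. U \<inter> orbit p x = {} \<and> card U + k = r}
      = {U \<in> inv_sets. U \<subseteq> \<Union>(cycles - {orbit p x}) \<and> card U + k = r}"
    unfolding inv_sets_def by blast
  then show ?thesis using card_inv_sets_within[of "cycles - {orbit p x}" "\<lambda>c. c + k = r"] by auto
qed

lemma card_N3:
  assumes r: "r \<ge> 1"
  shows "card (N3 n r p) =
    (\<Sum>C\<in>cycles. card C * (\<Sum>k\<in>{2..<card C}. card {F. F \<subseteq> cycles - {C} \<and> sum card F + k = r}))"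
proof -
  have "card (N3 n r p) = card (shortcut_params r)"
    using N3_eq_image_shortcut[OF r] inj_on_shortcut_params card_image by metis
  also have "\<dots> = (\<Sum>x\<in>moved p. \<Sum>k\<in>{2..<period x}.
      card {U \<in> inv_sets. U \<inter> orbit p x = {} \<and> card U + k = r})"
    unfolding shortcut_params_def
    by (subst card_SigmaI) (auto intro!: finite_SigmaI sum.cong finite_moved_p
        intro: finite_subset[of _ "Pow (moved p)"] simp: inv_sets_def finite_moved_p)
  also have "\<dots> = (\<Sum>x\<in>moved p. \<Sum>k\<in>{2..<card (orbit p x)}.
      card {F. F \<subseteq> cycles - {orbit p x} \<and> sum card F + k = r})"
    by (intro sum.cong refl) (simp_all add: period_def card_inv_sets_off_orbit)
  also have "\<dots> = (\<Sum>C\<in>cycles.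
      card C * (\<Sum>k\<in>{2..<card C}. card {F. F \<subseteq> cycles - {C} \<and> sum card F + k = r}))"
    by (rule sum_moved_conv_cycles)
  finally show ?thesis .
qed

end

section \<open>Counting sub-multisets by their sum\<close>

text \<open>The number of sub-multisets of xs with sum m. The target is an integer so that
  the recursion never truncates.\<close>
fun nsubsums :: "nat list \<Rightarrow> int \<Rightarrow> nat" where
  "nsubsums [] m = (if m = 0 then 1 else 0)"
| "nsubsums (a # xs) m = nsubsums xs m + nsubsums xs (m - int a)"

lemma image_mset_mset_set_eq_add_mset:
  assumes f: "finite X" and e: "image_mset w (mset_set X) = add_mset a M"
  shows "\<exists>x\<in>X. w x = a \<and> image_mset w (mset_set (X - {x})) = M"
proof -
  have "a \<in># image_mset w (mset_set X)" using e by simp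
  then obtain x where x: "x \<in> X" "w x = a" using f by (auto simp: in_image_mset)
  have "mset_set (X - {x}) = mset_set X - {#x#}" using mset_set_Diff[OF f, of "{x}"] x by simp
  moreover have "image_mset w (mset_set X - {#x#}) = image_mset w (mset_set X) - {#w x#}"
    using image_mset_Diff[of "{#x#}" "mset_set X" w] x f by simp
  ultimately show ?thesis using x e by auto
qed

lemma card_subsets_sum_remove:
  assumes f: "finite X" and x: "x \<in> X"
  shows "card {F. F \<subseteq> X \<and> int (sum w F) = m} =
    card {F. F \<subseteq> X - {x} \<and> int (sum w F) = m}
      + card {F. F \<subseteq> X - {x} \<and> int (sum w F) = m - int (w x)}"
proof -
  let ?A = "{F. F \<subseteq> X - {x} \<and> int (sum w F) = m}"
  let ?B = "{F. F \<subseteq> X - {x} \<and> int (sum w F) = m - int (w x)}"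
  have sum_insert: "sum w (insert x G) = w x + sum w G" if "G \<subseteq> X - {x}" for G
    using that f finite_subset by (subst sum.insert) auto
  have "{F. F \<subseteq> X \<and> int (sum w F) = m} = ?A \<union> insert x ` ?B"
  proof (rule set_eqI, rule iffI)
    fix F assume F: "F \<in> {F. F \<subseteq> X \<and> int (sum w F) = m}"
    show "F \<in> ?A \<union> insert x ` ?B"
    proof (cases "x \<in> F")
      case True
      have sub: "F - {x} \<subseteq> X - {x}" using F by blast
      have "sum w F = w x + sum w (F - {x})"
        using sum_insert[OF sub] True by (simp add: insert_absorb)
      then have "F - {x} \<in> ?B" using F sub by (auto simp del: of_nat_sum)
      moreover have "F = insert x (F - {x})" using True by blast
      ultimately show ?thesis by blast
    qed (use F in auto)
  next
    fix F assume "F \<in> ?A \<union> insert x ` ?B"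
    then show "F \<in> {F. F \<subseteq> X \<and> int (sum w F) = m}"
    proof
      assume "F \<in> insert x ` ?B"
      then obtain G where G: "G \<in> ?B" "F = insert x G" by blast
      then show ?thesis using sum_insert[of G] x by (auto simp del: of_nat_sum)
    qed auto
  qed
  moreover have "inj_on (insert x) ?B" by (rule inj_onI) blast
  moreover have "?A \<inter> insert x ` ?B = {}" by auto
  moreover have "finite ?A" "finite ?B" using f by simp_all
  ultimately show ?thesis by (simp add: card_Un_disjoint card_image)
qed

lemma card_subsets_sum_eq_nsubsums:
  "finite X \<Longrightarrow> image_mset w (mset_set X) = mset xs \<Longrightarrow>
     card {F. F \<subseteq> X \<and> int (sum w F) = m} = nsubsums xs m"
proof (induction xs arbitrary: X m)
  case Nil
  have "image_mset w (mset_set X) = {#}" using Nil.prems(2) by (simp only: mset.simps)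
  then have "mset_set X = {#}" by (simp only: image_mset_is_empty_iff)
  then have "X = {}" using Nil.prems(1) by (simp only: mset_set_empty_iff) blast
  then have "{F. F \<subseteq> X \<and> int (sum w F) = m} = (if m = 0 then {{}} else {})"
    by (auto simp del: of_nat_sum)
  then show ?case by simp
next
  case (Cons a xs)
  have e: "image_mset w (mset_set X) = add_mset a (mset xs)" using Cons.prems(2) by simp
  obtain x where x: "x \<in> X" "w x = a" "image_mset w (mset_set (X - {x})) = mset xs"
    using image_mset_mset_set_eq_add_mset[OF Cons.prems(1) e] by blast
  note IH = Cons.IH[OF finite_Diff[OF Cons.prems(1)] x(3)]
  show ?case by (simp only: card_subsets_sum_remove[OF Cons.prems(1) x(1)] IH x(2) nsubsums.simps)
qed

lemma card_subsets_card_sum: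
  "finite Y \<Longrightarrow> image_mset card (mset_set Y) = mset xs \<Longrightarrow>
     card {F. F \<subseteq> Y \<and> sum card F + k = r} = nsubsums xs (int r - int k)"
proof -
  assume Y: "finite Y" "image_mset card (mset_set Y) = mset xs"
  have "{F. F \<subseteq> Y \<and> sum card F + k = r} = {F. F \<subseteq> Y \<and> int (sum card F) = int r - int k}"
    by (auto simp del: of_nat_sum)
  then show ?thesis using card_subsets_sum_eq_nsubsums[OF Y] by simp
qed

lemma bnm_pascal: "p \<ge> 0 \<Longrightarrow> bnm (p + 1) c = bnm p c + bnm p (c - 1)"
proof -
  assume p: "p \<ge> 0"
  consider "c \<le> 0" | "c > 0 \<and> c \<le> p" | "c = p + 1" | "c > p + 1" by linarith
  then show ?thesis
  proof cases
    case 2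
    obtain a where a: "p = int a" using p nonneg_int_cases by blast
    obtain b where b: "c = int (Suc b)" using 2 by (metis Suc_pred of_nat_0_less_iff pos_int_cases)
    have "b < a" using 2 a b by simp
    then show ?thesis unfolding a b by (simp add: bnm_def nat_add_distrib)
  next
    case 3
    then show ?thesis using p by (simp add: bnm_def nat_add_distrib)
  qed (use p in \<open>auto simp: bnm_def nat_add_distrib\<close>)
qed

lemma bnm_symmetric: "p \<ge> 0 \<Longrightarrow> bnm p c = bnm p (p - c)"
proof (cases "c < 0 \<or> c > p")
  case False
  moreover assume "p \<ge> 0"
  ultimately have "nat (p - c) = nat p - nat c" by (simp add: nat_diff_distrib)
  then show ?thesis
    using False \<open>p \<ge> 0\<close> unfolding bnm_def by (simp add: binomial_symmetric[symmetric] nat_le_eq_zle)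
qed (auto simp: bnm_def)

lemma nsubsums_twos: "nsubsums (replicate q 2) m = (if even m then bnm (int q) (m div 2) else 0)"
proof (induction q arbitrary: m)
  case 0 then show ?case by (auto simp: bnm_def)
next
  case (Suc q)
  show ?case
  proof (cases "even m")
    case True
    then have "(m - 2) div 2 = m div 2 - 1" by auto
    then show ?thesis using True Suc bnm_pascal[of "int q" "m div 2"] by (simp add: add.commute)
  qed (use Suc in simp)
qed

lemma nsubsums_twos_even: "even m \<Longrightarrow> nsubsums (replicate q 2) m = bnm (int q) (m div 2)"
  and nsubsums_twos_odd: "odd m \<Longrightarrow> nsubsums (replicate q 2) m = 0"
  by (simp_all add: nsubsums_twos)

lemma sum_nsubsums_twos_even:
  "even c \<Longrightarrow> (\<Sum>k\<in>{2..<2*a+2}. nsubsums (replicate q 2) (c - int k))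
    = (\<Sum>i=1..a. bnm (int q) (c div 2 - int i))"
proof (induction a)
  case (Suc a)
  have "2 * Suc a + 2 = Suc (Suc (2*a+2))" by simp
  moreover have "(c - int (2*a+2)) div 2 = c div 2 - int (Suc a)" using Suc.prems by auto
  ultimately show ?case using Suc by (simp add: nsubsums_twos)
qed simp

lemma sum_nsubsums_twos_odd:
  "odd c \<Longrightarrow> (\<Sum>k\<in>{2..<2*a+2}. nsubsums (replicate q 2) (c - int k))
    = (\<Sum>i=1..a. bnm (int q) ((c - 1) div 2 - int i))"
proof (induction a)
  case (Suc a)
  have "2 * Suc a + 2 = Suc (Suc (2*a+2))" by simp
  moreover have "(c - int (Suc (2*a+2))) div 2 = (c - 1) div 2 - int (Suc a)" using Suc.prems by auto
  ultimately show ?case using Suc by (simp add: nsubsums_twos)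
qed simp

section \<open>The closed forms\<close>

lemma count_odd_type_even_r:
  assumes r: "r = 2*t" and s: "2 \<le> s" "s \<le> r"
  shows "nsubsums ((2*s-1) # replicate (r-s) 2) (int (r-1))
      + nsubsums ((2*s-1) # replicate (r-s) 2) (int r)
      + (2*s-1) * (\<Sum>k\<in>{2..<2*s-1}. nsubsums (replicate (r-s) 2) (int r - int k))
    = 2 * bnm (int r - int s) (int t) + (2*s-1) * (\<Sum>i=1..s-1. bnm (int r - int s) (int t - int i))"
proof -
  obtain a where a: "s = a + 2" using s by (metis add.commute le_Suc_ex)
  define q where "q = r - s"
  let ?R = "nsubsums (replicate q 2)"
  have Q: "int q = int r - int s" using s q_def by simp
  have "(\<Sum>k\<in>{2..<2*a+2}. ?R (int r - int k)) = (\<Sum>i=1..a. bnm (int q) (int t - int i))"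
    using sum_nsubsums_twos_even[of "int r" q a] r by simp
  moreover have "?R (int r - int (2*a+2)) = bnm (int q) (int t - int (Suc a))"
    by (subst nsubsums_twos_even) (use r in auto)
  ultimately have sum: "(\<Sum>k\<in>{2..<2*s-1}. ?R (int r - int k)) = (\<Sum>i=1..s-1. bnm (int q) (int t - int i))"
    using a by (simp add: numeral_eq_Suc)
  have e1: "?R (int (r-1)) = 0" by (rule nsubsums_twos_odd) (use r s in auto)
  have "?R (int (r-1) - int (2*s-1)) = bnm (int q) (int t - int s)"
    by (subst nsubsums_twos_even) (use r s in auto)
  also have "\<dots> = bnm (int q) (int t)" using bnm_symmetric[of "int q" "int t - int s"] Q r by simp
  finally have e2: "?R (int (r-1) - int (2*s-1)) = bnm (int q) (int t)" .
  have e3: "?R (int r) = bnm (int q) (int t)" by (subst nsubsums_twos_even) (use r in auto)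
  have e4: "?R (int r - int (2*s-1)) = 0" by (rule nsubsums_twos_odd) (use r s in auto)
  show ?thesis unfolding q_def[symmetric] Q[symmetric] nsubsums.simps e1 e2 e3 e4 sum by simp
qed

lemma count_odd_type_odd_r:
  assumes r: "r = 2*t+1" and s: "2 \<le> s" "s \<le> r"
  shows "nsubsums ((2*s-1) # replicate (r-s) 2) (int (r-1))
      + nsubsums ((2*s-1) # replicate (r-s) 2) (int r)
      + (2*s-1) * (\<Sum>k\<in>{2..<2*s-1}. nsubsums (replicate (r-s) 2) (int r - int k))
    = 2 * bnm (int r - int s) (int t) + (2*s-1) * (\<Sum>i=1..s-2. bnm (int r - int s) (int t - int i))"
proof -
  obtain a where a: "s = a + 2" using s by (metis add.commute le_Suc_ex)
  define q where "q = r - s"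
  let ?R = "nsubsums (replicate q 2)"
  have Q: "int q = int r - int s" using s q_def by simp
  have "(\<Sum>k\<in>{2..<2*a+2}. ?R (int r - int k)) = (\<Sum>i=1..a. bnm (int q) (int t - int i))"
    using sum_nsubsums_twos_odd[of "int r" q a] r by simp
  moreover have "?R (int r - int (2*a+2)) = 0" by (rule nsubsums_twos_odd) (use r in auto)
  ultimately have sum: "(\<Sum>k\<in>{2..<2*s-1}. ?R (int r - int k)) = (\<Sum>i=1..s-2. bnm (int q) (int t - int i))"
    using a by (simp add: numeral_eq_Suc)
  have e1: "?R (int (r-1)) = bnm (int q) (int t)" by (subst nsubsums_twos_even) (use r s in auto)
  have e2: "?R (int (r-1) - int (2*s-1)) = 0" by (rule nsubsums_twos_odd) (use r s in auto)
  have e3: "?R (int r) = 0" by (rule nsubsums_twos_odd) (use r in auto)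
  have "?R (int r - int (2*s-1)) = bnm (int q) (int t + 1 - int s)"
    by (subst nsubsums_twos_even) (use r s in \<open>auto simp: algebra_simps\<close>)
  also have "\<dots> = bnm (int q) (int t)" using bnm_symmetric[of "int q" "int t + 1 - int s"] Q r by simp
  finally have e4: "?R (int r - int (2*s-1)) = bnm (int q) (int t)" .
  show ?thesis unfolding q_def[symmetric] Q[symmetric] nsubsums.simps e1 e2 e3 e4 sum by simp
qed

lemma sum_bnm_pascal:
  "Q \<ge> 0 \<Longrightarrow> (\<Sum>i\<in>I. bnm (Q + 1) (f i)) = (\<Sum>i\<in>I. bnm Q (f i)) + (\<Sum>i\<in>I. bnm Q (f i - 1))"
  by (simp add: bnm_pascal sum.distrib)

lemma bnm_add2: "Q \<ge> 0 \<Longrightarrow> bnm (Q + 2) c = bnm Q c + 2 * bnm Q (c - 1) + bnm Q (c - 2)"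
  using bnm_pascal[of "Q + 1" c] bnm_pascal[of Q c] bnm_pascal[of Q "c - 1"]
  by (simp add: add.assoc diff_diff_eq)

lemma count_N12_even_type_even_r:
  assumes r: "r = 2*t" and s: "2 \<le> s" "s + 2 \<le> r"
  shows "nsubsums (2*s # 3 # replicate (r-s-2) 2) (int (r-1))
      + nsubsums (2*s # 3 # replicate (r-s-2) 2) (int r)
    = 2 * (bnm (int r - int s - 2) (int t) + bnm (int r - int s - 2) (int t - 2))"
proof -
  define q where "q = r - s - 2"
  let ?R = "nsubsums (replicate q 2)" and ?b = "\<lambda>j. bnm (int q) (int t - j)"
  have Q: "int q = int r - int s - 2" and Q0: "int q \<ge> 0" using s q_def by simp_all
  have t: "t \<ge> 2" using r s by simp
  have e1: "?R (int (r-1)) = 0" by (rule nsubsums_twos_odd) (use r t in auto)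
  have e2: "?R (int (r-1) - int 3) = ?b 2" by (subst nsubsums_twos_even) (use r t in \<open>auto simp: algebra_simps\<close>)
  have e3: "?R (int (r-1) - int (2*s)) = 0" by (rule nsubsums_twos_odd) (use r t in auto)
  have e4: "?R (int (r-1) - int (2*s) - int 3) = ?b 0"
  proof -
    have "?R (int (r-1) - int (2*s) - int 3) = bnm (int q) (int t - 2 - int s)"
      by (subst nsubsums_twos_even) (use r t in \<open>auto simp: algebra_simps\<close>)
    also have "\<dots> = ?b 0" using bnm_symmetric[OF Q0, of "int t - 2 - int s"] Q r by simp
    finally show ?thesis .
  qed
  have e5: "?R (int r) = ?b 0" by (subst nsubsums_twos_even) (use r in \<open>auto simp: algebra_simps\<close>)
  have e6: "?R (int r - int 3) = 0" by (rule nsubsums_twos_odd) (use r in auto)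
  have e7: "?R (int r - int (2*s)) = ?b 2"
  proof -
    have "?R (int r - int (2*s)) = bnm (int q) (int t - int s)"
      by (subst nsubsums_twos_even) (use r in \<open>auto simp: algebra_simps\<close>)
    also have "\<dots> = ?b 2" using bnm_symmetric[OF Q0, of "int t - int s"] Q r by simp
    finally show ?thesis .
  qed
  have e8: "?R (int r - int (2*s) - int 3) = 0" by (rule nsubsums_twos_odd) (use r in auto)
  show ?thesis unfolding q_def[symmetric] Q[symmetric] nsubsums.simps e1 e2 e3 e4 e5 e6 e7 e8 by simp
qed

lemma sum_count_even_type_even_r:
  assumes r: "r = 2*t" and s: "2 \<le> s" "s + 2 \<le> r"
  shows "(\<Sum>k\<in>{2..<2*s}. nsubsums (3 # replicate (r-s-2) 2) (int r - int k))
    = 2 * bnm (int r - int s - 2) (int t - 1)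
        + (\<Sum>i=1..s-2. bnm (int r - int s - 2) (int t - int i - 1))
        + (\<Sum>i=1..s-2. bnm (int r - int s - 2) (int t - int i - 2))"
proof -
  obtain a where a: "s = a + 2" using s by (metis add.commute le_Suc_ex)
  define q where "q = r - s - 2"
  let ?R = "nsubsums (replicate q 2)" and ?b = "\<lambda>j. bnm (int q) (int t - j)"
  have Q: "int q = int r - int s - 2" and Q0: "int q \<ge> 0" using s q_def by simp_all
  have ss: "2*s = 2*(Suc a) + 2" using a by simp
  have S1: "(\<Sum>k\<in>{2..<2*s}. ?R (int r - int k)) = ?b 1 + (\<Sum>i=1..a. ?b (int i + 1))"
  proof -
    have "(\<Sum>k\<in>{2..<2*s}. ?R (int r - int k)) = (\<Sum>i=1..Suc a. bnm (int q) (int r div 2 - int i))"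
      unfolding ss by (rule sum_nsubsums_twos_even) (simp add: r)
    also have "\<dots> = (\<Sum>i=1..Suc a. ?b (int i))" using r by simp
    also have "\<dots> = ?b 1 + (\<Sum>i=1..a. ?b (int (Suc i)))"
      by (induction a) (auto simp: add.assoc)
    finally show ?thesis by (simp add: add.commute)
  qed
  have S2: "(\<Sum>k\<in>{2..<2*s}. ?R (int r - int k - int 3)) = (\<Sum>i=1..a. ?b (int i + 2)) + ?b 1"
  proof -
    have "(\<Sum>k\<in>{2..<2*s}. ?R (int r - int k - int 3)) = (\<Sum>k\<in>{2..<2*s}. ?R ((int r - 3) - int k))"
      by (rule sum.cong) (simp_all add: algebra_simps)
    also have "\<dots> = (\<Sum>i=1..Suc a. bnm (int q) ((int r - 3 - 1) div 2 - int i))"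
      unfolding ss by (rule sum_nsubsums_twos_odd) (simp add: r)
    also have "\<dots> = (\<Sum>i=1..Suc a. ?b (int i + 2))"
      using r by (intro sum.cong) (auto simp: algebra_simps)
    also have "\<dots> = (\<Sum>i=1..a. ?b (int i + 2)) + ?b (int (Suc a) + 2)" by simp
    also have "?b (int (Suc a) + 2) = ?b 1"
      using bnm_symmetric[OF Q0, of "int t - (int (Suc a) + 2)"] Q r a by simp
    finally show ?thesis .
  qed
  show ?thesis
    unfolding q_def[symmetric] Q[symmetric] nsubsums.simps sum.distrib S1 S2
    using a by (simp add: algebra_simps diff_diff_eq)
qed

lemma count_N3_even_type_even_r:
  assumes r: "r = 2*t" and s: "2 \<le> s" "s + 2 \<le> r"
  shows "2*s * (\<Sum>k\<in>{2..<2*s}. nsubsums (3 # replicate (r-s-2) 2) (int r - int k))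
      + 3 * nsubsums (2*s # replicate (r-s-2) 2) (int r - 2)
    = 2*s * (2 * bnm (int r - int s - 2) (int t - 1)
        + (\<Sum>i=1..s-2. bnm (int r - int s - 2) (int t - int i - 1))
        + (\<Sum>i=1..s-2. bnm (int r - int s - 2) (int t - int i - 2)))
      + 6 * bnm (int r - int s - 2) (int t - 1)"
proof -
  define q where "q = r - s - 2"
  let ?R = "nsubsums (replicate q 2)" and ?b = "\<lambda>j. bnm (int q) (int t - j)"
  have Q: "int q = int r - int s - 2" and Q0: "int q \<ge> 0" using s q_def by simp_all
  have e1: "?R (int r - 2) = ?b 1"
    by (subst nsubsums_twos_even) (use r s in \<open>auto simp: algebra_simps\<close>)
  have "?R (int r - 2 - int (2*s)) = bnm (int q) (int t - 1 - int s)"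
    by (subst nsubsums_twos_even) (use r in \<open>auto simp: algebra_simps\<close>)
  also have "\<dots> = ?b 1" using bnm_symmetric[OF Q0, of "int t - 1 - int s"] Q r by simp
  finally have e2: "?R (int r - 2 - int (2*s)) = ?b 1" .
  show ?thesis
    unfolding sum_count_even_type_even_r[OF assms]
    unfolding q_def[symmetric] Q[symmetric] nsubsums.simps e1 e2 by simp
qed

lemma count_even_type_even_r:
  assumes r: "r = 2*t" and s: "2 \<le> s" "s + 2 \<le> r"
  shows "nsubsums (2*s # 3 # replicate (r-s-2) 2) (int (r-1))
      + nsubsums (2*s # 3 # replicate (r-s-2) 2) (int r)
      + (2*s * (\<Sum>k\<in>{2..<2*s}. nsubsums (3 # replicate (r-s-2) 2) (int r - int k))
        + 3 * nsubsums (2*s # replicate (r-s-2) 2) (int r - 2))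
    = 2 * bnm (int r - int s) (int t) + 2 * (2*s + 1) * bnm (int r - int s - 2) (int t - 1)
      + 2*s * (\<Sum>i=1..s-2. bnm (int r - int s - 1) (int t - int i - 1))"
proof -
  define Q where "Q = int r - int s - 2"
  have Q0: "Q \<ge> 0" using s Q_def by simp
  have Q: "int r - int s = Q + 2" "int r - int s - 1 = Q + 1" "int r - int s - 2 = Q"
    using Q_def by simp_all
  have "bnm (int r - int s) (int t) = bnm Q (int t) + 2 * bnm Q (int t - 1) + bnm Q (int t - 2)"
    unfolding Q(1) by (rule bnm_add2[OF Q0])
  moreover have "(\<Sum>i=1..s-2. bnm (int r - int s - 1) (int t - int i - 1))
      = (\<Sum>i=1..s-2. bnm Q (int t - int i - 1)) + (\<Sum>i=1..s-2. bnm Q (int t - int i - 2))"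
    unfolding Q(2) using sum_bnm_pascal[OF Q0, of "\<lambda>i. int t - int i - 1" "{1..s-2}"]
    by (simp add: algebra_simps)
  ultimately show ?thesis
    unfolding count_N12_even_type_even_r[OF assms] count_N3_even_type_even_r[OF assms] Q(3)
    by (simp add: algebra_simps)
qed

lemma count_N12_even_type_odd_r:
  assumes r: "r = 2*t+1" and s: "2 \<le> s" "s + 2 \<le> r"
  shows "nsubsums (2*s # 3 # replicate (r-s-2) 2) (int (r-1))
      + nsubsums (2*s # 3 # replicate (r-s-2) 2) (int r)
    = 2 * (bnm (int r - int s - 2) (int t) + bnm (int r - int s - 2) (int t - 1))"
proof -
  define q where "q = r - s - 2"
  let ?R = "nsubsums (replicate q 2)" and ?b = "\<lambda>j. bnm (int q) (int t - j)"
  have Q: "int q = int r - int s - 2" and Q0: "int q \<ge> 0" using s q_def by simp_all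
  have e1: "?R (int (r-1)) = ?b 0" by (subst nsubsums_twos_even) (use r in auto)
  have e2: "?R (int (r-1) - int 3) = 0" by (rule nsubsums_twos_odd) (use r in auto)
  have e3: "?R (int (r-1) - int (2*s)) = ?b 1"
  proof -
    have "?R (int (r-1) - int (2*s)) = bnm (int q) (int t - int s)"
      by (subst nsubsums_twos_even) (use r in \<open>auto simp: algebra_simps\<close>)
    also have "\<dots> = ?b 1" using bnm_symmetric[OF Q0, of "int t - int s"] Q r by simp
    finally show ?thesis .
  qed
  have e4: "?R (int (r-1) - int (2*s) - int 3) = 0" by (rule nsubsums_twos_odd) (use r in auto)
  have e5: "?R (int r) = 0" by (rule nsubsums_twos_odd) (use r in auto)
  have e6: "?R (int r - int 3) = ?b 1" by (subst nsubsums_twos_even) (use r s in \<open>auto simp: algebra_simps\<close>)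
  have e7: "?R (int r - int (2*s)) = 0" by (rule nsubsums_twos_odd) (use r in auto)
  have e8: "?R (int r - int (2*s) - int 3) = ?b 0"
  proof -
    have "?R (int r - int (2*s) - int 3) = bnm (int q) (int t - 1 - int s)"
      by (subst nsubsums_twos_even) (use r in \<open>auto simp: algebra_simps\<close>)
    also have "\<dots> = ?b 0" using bnm_symmetric[OF Q0, of "int t - 1 - int s"] Q r by simp
    finally show ?thesis .
  qed
  show ?thesis unfolding q_def[symmetric] Q[symmetric] nsubsums.simps e1 e2 e3 e4 e5 e6 e7 e8 by simp
qed

lemma count_N3_even_type_odd_r:
  assumes r: "r = 2*t+1" and s: "2 \<le> s" "s + 2 \<le> r"
  shows "2*s * (\<Sum>k\<in>{2..<2*s}. nsubsums (3 # replicate (r-s-2) 2) (int r - int k))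
      + 3 * nsubsums (2*s # replicate (r-s-2) 2) (int r - 2)
    = 2*s * ((\<Sum>i=1..s-1. bnm (int r - int s - 2) (int t - int i))
        + (\<Sum>i=1..s-1. bnm (int r - int s - 2) (int t - int i - 1)))"
proof -
  obtain a where a: "s = a + 2" using s by (metis add.commute le_Suc_ex)
  define q where "q = r - s - 2"
  let ?R = "nsubsums (replicate q 2)"
  have Q: "int q = int r - int s - 2" using s q_def by simp
  have ss: "2*s = 2*(Suc a) + 2" and s1: "s - 1 = Suc a" using a by simp_all
  have S1: "(\<Sum>k\<in>{2..<2*s}. ?R (int r - int k)) = (\<Sum>i=1..s-1. bnm (int q) (int t - int i))"
  proof -
    have "(\<Sum>k\<in>{2..<2*s}. ?R (int r - int k)) = (\<Sum>i=1..Suc a. bnm (int q) ((int r - 1) div 2 - int i))"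
      unfolding ss by (rule sum_nsubsums_twos_odd) (simp add: r)
    then show ?thesis using r s1 by simp
  qed
  have S2: "(\<Sum>k\<in>{2..<2*s}. ?R (int r - int k - int 3)) = (\<Sum>i=1..s-1. bnm (int q) (int t - int i - 1))"
  proof -
    have "(\<Sum>k\<in>{2..<2*s}. ?R (int r - int k - int 3)) = (\<Sum>k\<in>{2..<2*s}. ?R ((int r - 3) - int k))"
      by (rule sum.cong) (simp_all add: algebra_simps)
    also have "\<dots> = (\<Sum>i=1..Suc a. bnm (int q) ((int r - 3) div 2 - int i))"
      unfolding ss by (rule sum_nsubsums_twos_even) (simp add: r)
    also have "\<dots> = (\<Sum>i=1..s-1. bnm (int q) (int t - int i - 1))"
      using r s1 by (intro sum.cong) (auto simp: algebra_simps)
    finally show ?thesis .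
  qed
  have e9: "?R (int r - 2) = 0" by (rule nsubsums_twos_odd) (use r in auto)
  have e10: "?R (int r - 2 - int (2*s)) = 0" by (rule nsubsums_twos_odd) (use r in auto)
  show ?thesis
    unfolding q_def[symmetric] Q[symmetric] nsubsums.simps sum.distrib S1 S2 e9 e10 by simp
qed

lemma count_even_type_odd_r:
  assumes r: "r = 2*t+1" and s: "2 \<le> s" "s + 2 \<le> r"
  shows "nsubsums (2*s # 3 # replicate (r-s-2) 2) (int (r-1))
      + nsubsums (2*s # 3 # replicate (r-s-2) 2) (int r)
      + (2*s * (\<Sum>k\<in>{2..<2*s}. nsubsums (3 # replicate (r-s-2) 2) (int r - int k))
        + 3 * nsubsums (2*s # replicate (r-s-2) 2) (int r - 2))
    = 2 * bnm (int r - int s - 1) (int t) + 2*s * (\<Sum>i=1..s-1. bnm (int r - int s - 1) (int t - int i))"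
proof -
  define Q where "Q = int r - int s - 2"
  have Q0: "Q \<ge> 0" using s Q_def by simp
  have Q: "int r - int s - 1 = Q + 1" "int r - int s - 2 = Q" using Q_def by simp_all
  show ?thesis
    unfolding count_N12_even_type_odd_r[OF assms] count_N3_even_type_odd_r[OF assms] Q
      bnm_pascal[OF Q0] by (simp add: algebra_simps sum.distrib)
qed

context perm_of_interval
begin

lemma card_N12_eq_nsubsums:
  assumes "cycle_type n p = mset xs"
  shows "card (N1 n r p) = nsubsums xs (int (r - 1))" "card (N2 n r p) = nsubsums xs (int r)"
proof -
  have "card {\<sigma> \<in> Sym n. agree \<sigma> = moved \<sigma> \<and> card (moved \<sigma>) = m} = nsubsums xs (int m)" for m
    using card_agreeing[of m] card_subsets_card_sum[OF finite_cycles, of xs 0 m] assms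
    by (simp add: cycle_type_def)
  moreover have "N1 n r p = {\<sigma> \<in> Sym n. agree \<sigma> = moved \<sigma> \<and> card (moved \<sigma>) = r - 1}"
    and "N2 n r p = {\<sigma> \<in> Sym n. agree \<sigma> = moved \<sigma> \<and> card (moved \<sigma>) = r}"
    using mem_N1_iff mem_N2_iff by auto
  ultimately show "card (N1 n r p) = nsubsums xs (int (r - 1))" "card (N2 n r p) = nsubsums xs (int r)"
    by simp_all
qed

text \<open>Transpositions contribute nothing to the sum in card_N3, as {2..<2} is empty.\<close>
lemma card_N3_one_long_cycle:
  assumes M: "cycle_type n p = add_mset l (replicate_mset q 2)" and l: "l \<ge> 3" and r: "r \<ge> 1"
  shows "card (N3 n r p) = l * (\<Sum>k\<in>{2..<l}. nsubsums (replicate q 2) (int r - int k))"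
proof -
  obtain C0 where C0: "C0 \<in> cycles" "card C0 = l"
      "image_mset card (mset_set (cycles - {C0})) = replicate_mset q 2"
    using image_mset_mset_set_eq_add_mset[OF finite_cycles M[unfolded cycle_type_def]] by blast
  let ?f = "\<lambda>C. card C * (\<Sum>k\<in>{2..<card C}. card {F. F \<subseteq> cycles - {C} \<and> sum card F + k = r})"
  have "card C = 2" if "C \<in> cycles - {C0}" for C
    using that C0(3) finite_cycles by (metis finite_Diff finite_set_mset_mset_set image_eqI
        in_replicate_mset set_image_mset)
  then have "(\<Sum>C\<in>cycles - {C0}. ?f C) = 0" by simp
  then have "card (N3 n r p) = ?f C0"
    unfolding card_N3[OF r] sum.remove[OF finite_cycles C0(1)] by simp
  also have "\<dots> = l * (\<Sum>k\<in>{2..<l}. nsubsums (replicate q 2) (int r - int k))"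
    using card_subsets_card_sum[of "cycles - {C0}" "replicate q 2"] finite_cycles C0 by simp
  finally show ?thesis .
qed

lemma card_N3_long_and_3_cycle:
  assumes M: "cycle_type n p = add_mset l (add_mset 3 (replicate_mset q 2))" and l: "l \<ge> 4"
    and r: "r \<ge> 1"
  shows "card (N3 n r p) = l * (\<Sum>k\<in>{2..<l}. nsubsums (3 # replicate q 2) (int r - int k))
    + 3 * nsubsums (l # replicate q 2) (int r - 2)"
proof -
  have M0: "image_mset card (mset_set cycles) = add_mset l (add_mset 3 (replicate_mset q 2))"
    and M1: "image_mset card (mset_set cycles) = add_mset 3 (add_mset l (replicate_mset q 2))"
    using M by (simp_all add: cycle_type_def add_mset_commute)
  obtain C0 where C0: "C0 \<in> cycles" "card C0 = l"
      "image_mset card (mset_set (cycles - {C0})) = add_mset 3 (replicate_mset q 2)"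
    using image_mset_mset_set_eq_add_mset[OF finite_cycles M0] by blast
  obtain C1 where C1: "C1 \<in> cycles" "card C1 = 3"
      "image_mset card (mset_set (cycles - {C1})) = add_mset l (replicate_mset q 2)"
    using image_mset_mset_set_eq_add_mset[OF finite_cycles M1] by blast
  have C1': "C1 \<in> cycles - {C0}" using C0 C1 l by auto
  let ?f = "\<lambda>C. card C * (\<Sum>k\<in>{2..<card C}. card {F. F \<subseteq> cycles - {C} \<and> sum card F + k = r})"
  have "card C = 2" if "C \<in> cycles - {C0} - {C1}" for C
  proof -
    have "card C \<in># image_mset card (mset_set (cycles - {C0}))"
      "card C \<in># image_mset card (mset_set (cycles - {C1}))"
      using that finite_cycles by simp_all
    then show ?thesis using C0(3) C1(3) l by (auto split: if_splits)
  qed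
  then have "(\<Sum>C\<in>cycles - {C0} - {C1}. ?f C) = 0" by simp
  then have "card (N3 n r p) = ?f C0 + ?f C1"
    unfolding card_N3[OF r] sum.remove[OF finite_cycles C0(1)]
      sum.remove[OF finite_Diff[OF finite_cycles] C1'] by simp
  moreover have "?f C0 = l * (\<Sum>k\<in>{2..<l}. nsubsums (3 # replicate q 2) (int r - int k))"
    using card_subsets_card_sum[of "cycles - {C0}" "3 # replicate q 2"] finite_cycles C0 by simp
  moreover have "{2..<card C1} = {2}" using C1(2) by auto
  then have "?f C1 = 3 * card {F. F \<subseteq> cycles - {C1} \<and> sum card F + 2 = r}"
    using C1(2) by simp
  moreover have "card {F. F \<subseteq> cycles - {C1} \<and> sum card F + 2 = r}
      = nsubsums (l # replicate q 2) (int r - 2)"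
    using card_subsets_card_sum[of "cycles - {C1}" "l # replicate q 2" 2 r] finite_cycles C1(3) by simp
  ultimately show ?thesis by simp
qed

lemma card_N123_odd_type:
  assumes r: "r = 2*t \<or> r = 2*t + 1" and s: "2 \<le> s" "s \<le> r"
    and M: "cycle_type n p = add_mset (2*s - 1) (replicate_mset (r - s) 2)"
  shows "card (N1 n r p) + card (N2 n r p) + card (N3 n r p) =
    (if r = 2*t then
       2 * bnm (int r - int s) (int t) + (2*s - 1) * (\<Sum>i=1..s-1. bnm (int r - int s) (int t - int i))
     else
       2 * bnm (int r - int s) (int t) + (2*s - 1) * (\<Sum>i=1..s-2. bnm (int r - int s) (int t - int i)))"
proof -
  have "cycle_type n p = mset ((2*s - 1) # replicate (r - s) 2)" using M by simp
  note N12 = card_N12_eq_nsubsums[OF this]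
  have N3: "card (N3 n r p) = (2*s-1) * (\<Sum>k\<in>{2..<2*s-1}. nsubsums (replicate (r-s) 2) (int r - int k))"
    by (rule card_N3_one_long_cycle[OF M]) (use s in auto)
  have eq: "card (N1 n r p) + card (N2 n r p) + card (N3 n r p) =
      nsubsums ((2*s-1) # replicate (r-s) 2) (int (r-1))
      + nsubsums ((2*s-1) # replicate (r-s) 2) (int r)
      + (2*s-1) * (\<Sum>k\<in>{2..<2*s-1}. nsubsums (replicate (r-s) 2) (int r - int k))"
    unfolding N12 N3 using s by simp
  show ?thesis
  proof (cases "r = 2*t")
    case True
    show ?thesis unfolding eq count_odd_type_even_r[OF True s] using True by simp
  next
    case False
    then have "r = 2*t + 1" using r by simp
    show ?thesis unfolding eq count_odd_type_odd_r[OF \<open>r = 2*t + 1\<close> s] using False by simp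
  qed
qed

lemma card_N123_even_type:
  assumes r: "r = 2*t \<or> r = 2*t + 1" and s: "2 \<le> s" "s + 2 \<le> r"
    and M: "cycle_type n p = add_mset (2*s) (add_mset 3 (replicate_mset (r - s - 2) 2))"
  shows "card (N1 n r p) + card (N2 n r p) + card (N3 n r p) =
    (if r = 2*t then
       2 * bnm (int r - int s) (int t) + 2 * (2*s + 1) * bnm (int r - int s - 2) (int t - 1)
       + 2*s * (\<Sum>i=1..s-2. bnm (int r - int s - 1) (int t - int i - 1))
     else
       2 * bnm (int r - int s - 1) (int t) + 2*s * (\<Sum>i=1..s-1. bnm (int r - int s - 1) (int t - int i)))"
proof -
  have "cycle_type n p = mset (2*s # 3 # replicate (r - s - 2) 2)" using M by simp
  note N12 = card_N12_eq_nsubsums[OF this]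
  have N3: "card (N3 n r p) = 2*s * (\<Sum>k\<in>{2..<2*s}. nsubsums (3 # replicate (r-s-2) 2) (int r - int k))
      + 3 * nsubsums (2*s # replicate (r-s-2) 2) (int r - 2)"
    by (rule card_N3_long_and_3_cycle[OF M]) (use s in auto)
  have eq: "card (N1 n r p) + card (N2 n r p) + card (N3 n r p) =
      nsubsums (2*s # 3 # replicate (r-s-2) 2) (int (r-1))
      + nsubsums (2*s # 3 # replicate (r-s-2) 2) (int r)
      + (2*s * (\<Sum>k\<in>{2..<2*s}. nsubsums (3 # replicate (r-s-2) 2) (int r - int k))
        + 3 * nsubsums (2*s # replicate (r-s-2) 2) (int r - 2))"
    unfolding N12 N3 using s by simp
  show ?thesis
  proof (cases "r = 2*t")
    case True
    show ?thesis unfolding eq count_even_type_even_r[OF True s] using True by simp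
  next
    case False
    then have "r = 2*t + 1" using r by simp
    show ?thesis unfolding eq count_even_type_odd_r[OF \<open>r = 2*t + 1\<close> s] using False by simp
  qed
qed

end

theorem lemma14:
  fixes t r n s :: nat and \<pi> :: "nat \<Rightarrow> nat"
  assumes "t \<ge> 2" and "r = 2*t \<or> r = 2*t + 1" and "n \<ge> 2*r - 1"
    and "\<pi> \<in> Sym n"
  shows "(2 \<le> s \<and> s \<le> r \<and>
           cycle_type n \<pi> = add_mset (2*s - 1) (replicate_mset (r - s) 2) \<longrightarrow>
          (let l = 2*s - 1 in
           card (ball_r n r \<pi> \<inter> ball_r n r id) = card (N1 n r \<pi>) + card (N2 n r \<pi>) + card (N3 n r \<pi>)
           \<and> card (N1 n r \<pi>) + card (N2 n r \<pi>) + card (N3 n r \<pi>) =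
             (if r = 2*t then
                2 * bnm (int r - int s) (int t) + l * (\<Sum>i=1..s-1. bnm (int r - int s) (int t - int i))
              else
                2 * bnm (int r - int s) (int t) + l * (\<Sum>i=1..s-2. bnm (int r - int s) (int t - int i)))))
       \<and>
         (2 \<le> s \<and> s + 2 \<le> r \<and>
           cycle_type n \<pi> = add_mset (2*s) (add_mset 3 (replicate_mset (r - s - 2) 2)) \<longrightarrow>
          (let l = 2*s in
           card (ball_r n r \<pi> \<inter> ball_r n r id) = card (N1 n r \<pi>) + card (N2 n r \<pi>) + card (N3 n r \<pi>)
           \<and> card (N1 n r \<pi>) + card (N2 n r \<pi>) + card (N3 n r \<pi>) =
             (if r = 2*t then
                2 * bnm (int r - int s) (int t) + 2 * (l + 1) * bnm (int r - int s - 2) (int t - 1)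
                + l * (\<Sum>i=1..s-2. bnm (int r - int s - 1) (int t - int i - 1))
              else
                2 * bnm (int r - int s - 1) (int t) + l * (\<Sum>i=1..s-1. bnm (int r - int s - 1) (int t - int i)))))"
proof -
  interpret perm_of_interval n \<pi> using assms(4) by unfold_locales (simp add: Sym_def)
  have r: "r \<ge> 1" using assms(1,2) by auto
  have odd_moved: "card (moved \<pi>) = 2*r - 1"
    if "2 \<le> s" "s \<le> r" "cycle_type n \<pi> = add_mset (2*s - 1) (replicate_mset (r - s) 2)"
    using that card_moved_eq_sum_mset by auto
  have even_moved: "card (moved \<pi>) = 2*r - 1"
    if "2 \<le> s" "s + 2 \<le> r" "cycle_type n \<pi> = add_mset (2*s) (add_mset 3 (replicate_mset (r - s - 2) 2))"
    using that card_moved_eq_sum_mset by auto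
  show ?thesis
    unfolding Let_def
    using card_ball_Int_ball_id[OF odd_moved r] card_N123_odd_type[OF assms(2)]
      card_ball_Int_ball_id[OF even_moved r] card_N123_even_type[OF assms(2)]
    by (intro conjI impI) (elim conjE; assumption)+
qed

end
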